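(* Let $\lambda,\mu\in\mathbb C$ and let $k\in\frac12+\mathbb Z_{\ge0}$ be a half-integer. Identify the principal symbol of $A=F_1\partial_x^{k-1/2}\overline D_1+F_2\partial_x^{k-1/2}\overline D_2+(\text{terms in }\mathcal D^{k-1/2}_{\lambda\mu})\in\mathcal D^k_{\lambda\mu}$ with the pair $(F_1,F_2)$. Then the induced action of $\mathcal K(2)$ on $\operatorname{gr}^k\mathcal D_{\lambda\mu}$ is $$L_{X_f}(F_1,F_2)=\Big(L^{\mu-\lambda-k}_{X_f}(F_1)-\tfrac12\,\overline D_1\overline D_2(f)\,F_2,\ L^{\mu-\lambda-k}_{X_f}(F_2)+\tfrac12\,\overline D_1\overline D_2(f)\,F_1\Big).$$
   Context: $C^\infty(S^{1|2})$ consists of $f=f_0(x)+\xi_1f_1(x)+\xi_2f_2(x)+\xi_1\xi_2f_{12}(x)$ with smooth complex-valued coefficients on the circle and odd Grassmann variables $\xi_1,\xi_2$; parity $p(x)=0,p(\xi_i)=1$; $f'=\partial_xf$. $\overline D_i=\partial_{\xi_i}-\xi_i\partial_x$. For homogeneous $f$, $X_f=f\partial_x-(-1)^{p(f)}\tfrac12(\overline D_1(f)\overline D_1+\overline D_2(f)\overline D_2)$; $\mathcal K(2)$ is the Lie superalgebra of all such $X_f$. $\mathcal F_\lambda$ is $C^\infty(S^{1|2})$ with action $L^\lambda_{X_f}=X_f+\lambda f'$. $\mathcal D_{\lambda\mu}$: linear differential operators $\mathcal F_\lambda\to\mathcal F_\mu$ with action $\mathcal L_{X_f}(A)=L^\mu_{X_f}\circ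 A-(-1)^{p(f)p(A)}A\circ L^\lambda_{X_f}$; each is a finite sum $\sum a_{\ell,m,n}\partial_x^\ell\overline D_1^m\overline D_2^n$, $m,n\in\{0,1\}$. For $k\in\frac12\mathbb Z_{\ge0}$, $\mathcal D^k_{\lambda\mu}$ consists of such sums with $\ell+\frac m2+\frac n2\le k$; it is $\mathcal K(2)$-stable, and $\operatorname{gr}^k\mathcal D_{\lambda\mu}=\mathcal D^k_{\lambda\mu}/\mathcal D^{k-1/2}_{\lambda\mu}$ carries the induced action. $\overline D_1\overline D_2(f)$ denotes $\overline D_1(\overline D_2(f))$. *)

theory Defs
  imports "HOL-Analysis.Analysis"
begin

text \<open>A superfunction f = f0(x) + xi1 f1(x) + xi2 f2(x) + xi1 xi2 f12(x), stored by its
four complex coefficient functions of the real variable x (the circle is R / 2 pi Z;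
smoothness below includes 2 pi periodicity).\<close>

datatype sfun = SF (c0: "real \<Rightarrow> complex") (c1: "real \<Rightarrow> complex")
                   (c2: "real \<Rightarrow> complex") (c12: "real \<Rightarrow> complex")

instantiation sfun :: ab_group_add
begin
definition zero_sfun :: sfun where
  "0 = SF (\<lambda>_. 0) (\<lambda>_. 0) (\<lambda>_. 0) (\<lambda>_. 0)"
definition plus_sfun :: "sfun \<Rightarrow> sfun \<Rightarrow> sfun" where
  "f + g = SF (\<lambda>x. c0 f x + c0 g x) (\<lambda>x. c1 f x + c1 g x)
              (\<lambda>x. c2 f x + c2 g x) (\<lambda>x. c12 f x + c12 g x)"
definition uminus_sfun :: "sfun \<Rightarrow> sfun" where
  "- f = SF (\<lambda>x. - c0 f x) (\<lambda>x. - c1 f x) (\<lambda>x. - c2 f x) (\<lambda>x. - c12 f x)"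
definition minus_sfun :: "sfun \<Rightarrow> sfun \<Rightarrow> sfun" where
  "f - g = SF (\<lambda>x. c0 f x - c0 g x) (\<lambda>x. c1 f x - c1 g x)
              (\<lambda>x. c2 f x - c2 g x) (\<lambda>x. c12 f x - c12 g x)"
instance
  by standard (simp_all add: zero_sfun_def plus_sfun_def uminus_sfun_def minus_sfun_def
                   sfun.expand algebra_simps)
end

text \<open>Grassmann product (xi1, xi2 odd, xi1 xi2 = - xi2 xi1, xi_i^2 = 0).\<close>
definition gmul :: "sfun \<Rightarrow> sfun \<Rightarrow> sfun" (infixl "\<star>" 70) where
  "f \<star> g = SF (\<lambda>x. c0 f x * c0 g x)
              (\<lambda>x. c0 f x * c1 g x + c1 f x * c0 g x)
              (\<lambda>x. c0 f x * c2 g x + c2 f x * c0 g x)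
              (\<lambda>x. c0 f x * c12 g x + c12 f x * c0 g x + c1 f x * c2 g x - c2 f x * c1 g x)"

definition scal :: "complex \<Rightarrow> sfun \<Rightarrow> sfun" where
  "scal c f = SF (\<lambda>x. c * c0 f x) (\<lambda>x. c * c1 f x) (\<lambda>x. c * c2 f x) (\<lambda>x. c * c12 f x)"

definition xi1 :: sfun where "xi1 = SF (\<lambda>_. 0) (\<lambda>_. 1) (\<lambda>_. 0) (\<lambda>_. 0)"
definition xi2 :: sfun where "xi2 = SF (\<lambda>_. 0) (\<lambda>_. 0) (\<lambda>_. 1) (\<lambda>_. 0)"

definition vd :: "(real \<Rightarrow> complex) \<Rightarrow> real \<Rightarrow> complex" where
  "vd \<phi> = (\<lambda>x. vector_derivative \<phi> (at x))"

definition dx :: "sfun \<Rightarrow> sfun" where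
  "dx f = SF (vd (c0 f)) (vd (c1 f)) (vd (c2 f)) (vd (c12 f))"

text \<open>Left partial derivatives in the odd variables:
  d/dxi1 (xi1 xi2 h) = xi2 h,  d/dxi2 (xi1 xi2 h) = - xi1 h.\<close>
definition dxi1 :: "sfun \<Rightarrow> sfun" where
  "dxi1 f = SF (c1 f) (\<lambda>_. 0) (c12 f) (\<lambda>_. 0)"
definition dxi2 :: "sfun \<Rightarrow> sfun" where
  "dxi2 f = SF (c2 f) (\<lambda>x. - c12 f x) (\<lambda>_. 0) (\<lambda>_. 0)"

definition Db1 :: "sfun \<Rightarrow> sfun" where "Db1 f = dxi1 f - xi1 \<star> dx f"
definition Db2 :: "sfun \<Rightarrow> sfun" where "Db2 f = dxi2 f - xi2 \<star> dx f"

definition smooth_circ :: "(real \<Rightarrow> complex) \<Rightarrow> bool" where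
  "smooth_circ \<phi> \<longleftrightarrow> (\<forall>x. \<phi> (x + 2 * pi) = \<phi> x) \<and>
     (\<exists>d. d 0 = \<phi> \<and> (\<forall>j x. (d j has_vector_derivative d (Suc j) x) (at x)))"

definition smooth_sf :: "sfun \<Rightarrow> bool" where
  "smooth_sf f \<longleftrightarrow> smooth_circ (c0 f) \<and> smooth_circ (c1 f) \<and> smooth_circ (c2 f) \<and> smooth_circ (c12 f)"

text \<open>Parity: b = False means even, b = True means odd.\<close>
definition has_parity :: "bool \<Rightarrow> sfun \<Rightarrow> bool" where
  "has_parity b f \<longleftrightarrow> (if b then c0 f = (\<lambda>_. 0) \<and> c12 f = (\<lambda>_. 0)
                               else c1 f = (\<lambda>_. 0) \<and> c2 f = (\<lambda>_. 0))"

definition psign :: "bool \<Rightarrow> complex" where "psign b = (if b then -1 else 1)"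

text \<open>Contact vector field X_f (f homogeneous of parity b) and the action on F_lambda.\<close>
definition Xf :: "bool \<Rightarrow> sfun \<Rightarrow> sfun \<Rightarrow> sfun" where
  "Xf b f g = f \<star> dx g - scal (psign b / 2) (Db1 f \<star> Db1 g + Db2 f \<star> Db2 g)"

definition Lw :: "complex \<Rightarrow> bool \<Rightarrow> sfun \<Rightarrow> sfun \<Rightarrow> sfun" where
  "Lw lam b f g = Xf b f g + scal lam (dx f \<star> g)"

definition ev_part :: "sfun \<Rightarrow> sfun" where "ev_part f = SF (c0 f) (\<lambda>_. 0) (\<lambda>_. 0) (c12 f)"
definition od_part :: "sfun \<Rightarrow> sfun" where "od_part f = SF (\<lambda>_. 0) (c1 f) (c2 f) (\<lambda>_. 0)"

definition op_even :: "(sfun \<Rightarrow> sfun) \<Rightarrow> sfun \<Rightarrow> sfun" where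
  "op_even A g = ev_part (A (ev_part g)) + od_part (A (od_part g))"
definition op_odd :: "(sfun \<Rightarrow> sfun) \<Rightarrow> sfun \<Rightarrow> sfun" where
  "op_odd A g = od_part (A (ev_part g)) + ev_part (A (od_part g))"

text \<open>Action of X_f on operators F_lambda \<rightarrow> F_mu:
  L(A) = L^mu o A - (-1)^{p(f) p(A)} A o L^lambda, extended linearly over the parity
  decomposition A = A_even + A_odd.\<close>
definition Lop :: "complex \<Rightarrow> complex \<Rightarrow> bool \<Rightarrow> sfun \<Rightarrow> (sfun \<Rightarrow> sfun) \<Rightarrow> sfun \<Rightarrow> sfun" where
  "Lop lam mu b f A = (\<lambda>g. Lw mu b f (A g) - op_even A (Lw lam b f g)
                             - scal (psign b) (op_odd A (Lw lam b f g)))"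

text \<open>Differential operators of order \<le> K/2: finite sums of a_{l,m,n} d_x^l Db1^m Db2^n with
  smooth coefficients and 2l + m + n \<le> K (equality required on smooth arguments).\<close>
definition mono_op :: "nat \<Rightarrow> nat \<Rightarrow> nat \<Rightarrow> sfun \<Rightarrow> sfun" where
  "mono_op l m n g = (dx ^^ l) ((Db1 ^^ m) ((Db2 ^^ n) g))"

definition in_D :: "nat \<Rightarrow> (sfun \<Rightarrow> sfun) \<Rightarrow> bool" where
  "in_D K A \<longleftrightarrow> (\<exists>a. (\<forall>l m n. smooth_sf (a l m n)) \<and>
     (\<forall>g. smooth_sf g \<longrightarrow>
        A g = (\<Sum>l\<le>K. \<Sum>m<2. \<Sum>n<2. if 2 * l + m + n \<le> K then a l m n \<star> mono_op l m n g else 0)))"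

end

theory Submission
  imports Defs
begin

text \<open>Orders of operators are doubled in \<open>in_D\<close>, so \<open>D^{n}\<close> is \<open>in_D (2 * n)\<close> and
  \<open>D^{n+1/2}\<close> is \<open>in_D (2 * n + 1)\<close>.
  The action of \<open>X_f\<close> on operators is a supercommutator with an operator of order one, so it
  preserves each \<open>in_D K\<close>; it therefore suffices to compute it on the top terms
  \<open>F \<star> dx^n (Db_i g)\<close>. Moving \<open>X_f\<close> past \<open>dx^n\<close> costs \<open>n dx f \<star> dx^n\<close> modulo lower order,
  and moving it past \<open>Db_i\<close> costs \<open>dx f / 2 \<star> Db_i \<mp> Db1 (Db2 f) / 2 \<star> Db_j\<close> exactly. The
  \<open>dx f\<close> contributions, together with \<open>lam dx f\<close> from \<open>L^lam\<close>, shift the weight of \<open>F_i\<close> from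
  \<open>mu\<close> to \<open>mu - lam - (n + 1/2)\<close>; the \<open>Db1 (Db2 f)\<close> contributions mix \<open>F1\<close> and \<open>F2\<close>.\<close>

section \<open>Smooth periodic functions\<close>

fun differentiable_upto :: "nat \<Rightarrow> (real \<Rightarrow> complex) \<Rightarrow> bool" where
  "differentiable_upto 0 \<phi> = True"
| "differentiable_upto (Suc j) \<phi> \<longleftrightarrow>
     (\<forall>x. \<phi> differentiable (at x)) \<and> differentiable_upto j (vd \<phi>)"

definition smooth_periodic :: "(real \<Rightarrow> complex) \<Rightarrow> bool" where
  "smooth_periodic \<phi> \<longleftrightarrow> (\<forall>j. differentiable_upto j \<phi>) \<and> (\<forall>x. \<phi> (x + 2 * pi) = \<phi> x)"

lemma vd_eqI: "(\<phi> has_vector_derivative D) (at x) \<Longrightarrow> vd \<phi> x = D"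
  by (simp add: vd_def vector_derivative_at)

lemma has_vector_derivative_vd:
  "\<phi> differentiable (at x) \<Longrightarrow> (\<phi> has_vector_derivative vd \<phi> x) (at x)"
  by (simp add: vd_def vector_derivative_works[symmetric])

lemma vd_add_differentiable:
  "(\<And>x. a differentiable (at x)) \<Longrightarrow> (\<And>x. b differentiable (at x)) \<Longrightarrow>
   vd (\<lambda>x. a x + b x) = (\<lambda>x. vd a x + vd b x)"
  by (rule ext, rule vd_eqI, intro has_vector_derivative_add has_vector_derivative_vd)

lemma vd_mult_differentiable:
  "(\<And>x. a differentiable (at x)) \<Longrightarrow> (\<And>x. b differentiable (at x)) \<Longrightarrow>
   vd (\<lambda>x. a x * b x) = (\<lambda>x. vd a x * b x + a x * vd b x)"
  by (rule ext, rule vd_eqI)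
     (auto simp: add.commute intro!: has_vector_derivative_mult has_vector_derivative_vd)

lemma vd_const [simp]: "vd (\<lambda>x. c) = (\<lambda>x. 0)"
  by (rule ext, rule vd_eqI, simp)

lemma differentiable_upto_Suc_imp: "differentiable_upto (Suc j) \<phi> \<Longrightarrow> differentiable_upto j \<phi>"
  by (induction j arbitrary: \<phi>) auto

lemma differentiable_upto_const: "differentiable_upto j (\<lambda>x. c)"
  by (induction j arbitrary: c) auto

lemma differentiable_upto_add:
  "differentiable_upto j a \<Longrightarrow> differentiable_upto j b \<Longrightarrow> differentiable_upto j (\<lambda>x. a x + b x)"
  by (induction j arbitrary: a b) (auto simp: vd_add_differentiable)

lemma differentiable_upto_mult:
  "differentiable_upto j a \<Longrightarrow> differentiable_upto j b \<Longrightarrow> differentiable_upto j (\<lambda>x. a x * b x)"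
proof (induction j arbitrary: a b)
  case (Suc j)
  have "differentiable_upto j (\<lambda>x. vd a x * b x + a x * vd b x)"
    using Suc by (intro differentiable_upto_add Suc.IH) (auto intro: differentiable_upto_Suc_imp)
  with Suc show ?case by (auto simp: vd_mult_differentiable)
qed simp

lemma smooth_periodic_differentiable: "smooth_periodic \<phi> \<Longrightarrow> \<phi> differentiable (at x)"
  unfolding smooth_periodic_def using differentiable_upto.simps(2)[of 0 \<phi>] by blast

lemma vd_periodic:
  assumes "\<And>x. \<phi> (x + p) = \<phi> x" "\<And>x. \<phi> differentiable (at x)"
  shows "vd \<phi> (x + p) = vd \<phi> x"
proof -
  have "((\<phi> \<circ> (\<lambda>y. y + p)) has_vector_derivative (1 *\<^sub>R vd \<phi> (x + p))) (at x)"
    by (rule vector_diff_chain_at) (auto intro!: derivative_eq_intros has_vector_derivative_vd assms)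
  moreover have "\<phi> \<circ> (\<lambda>y. y + p) = \<phi>" using assms(1) by (auto simp: o_def)
  ultimately show ?thesis using vd_eqI by fastforce
qed

lemma smooth_periodic_vd: "smooth_periodic \<phi> \<Longrightarrow> smooth_periodic (vd \<phi>)"
  unfolding smooth_periodic_def using differentiable_upto.simps(2) vd_periodic by blast

lemma smooth_periodic_const: "smooth_periodic (\<lambda>x. c)"
  unfolding smooth_periodic_def by (auto intro: differentiable_upto_const)

lemma smooth_periodic_add: "smooth_periodic a \<Longrightarrow> smooth_periodic b \<Longrightarrow> smooth_periodic (\<lambda>x. a x + b x)"
  unfolding smooth_periodic_def by (auto intro: differentiable_upto_add)

lemma smooth_periodic_mult: "smooth_periodic a \<Longrightarrow> smooth_periodic b \<Longrightarrow> smooth_periodic (\<lambda>x. a x * b x)"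
  unfolding smooth_periodic_def by (auto intro: differentiable_upto_mult)

lemma smooth_periodic_minus: "smooth_periodic a \<Longrightarrow> smooth_periodic (\<lambda>x. - a x)"
  using smooth_periodic_mult[OF smooth_periodic_const[of "-1"], of a] by simp

lemma smooth_periodic_diff: "smooth_periodic a \<Longrightarrow> smooth_periodic b \<Longrightarrow> smooth_periodic (\<lambda>x. a x - b x)"
  using smooth_periodic_add[OF _ smooth_periodic_minus[of b], of a] by simp

lemma smooth_periodic_divide: "smooth_periodic a \<Longrightarrow> smooth_periodic (\<lambda>x. a x / c)"
  using smooth_periodic_mult[OF _ smooth_periodic_const[of "1/c"], of a] by simp

lemma vd_add: "smooth_periodic a \<Longrightarrow> smooth_periodic b \<Longrightarrow> vd (\<lambda>x. a x + b x) = (\<lambda>x. vd a x + vd b x)"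
  by (simp add: vd_add_differentiable smooth_periodic_differentiable)

lemma vd_mult:
  "smooth_periodic a \<Longrightarrow> smooth_periodic b \<Longrightarrow> vd (\<lambda>x. a x * b x) = (\<lambda>x. vd a x * b x + a x * vd b x)"
  by (simp add: vd_mult_differentiable smooth_periodic_differentiable)

lemma vd_minus: "smooth_periodic a \<Longrightarrow> vd (\<lambda>x. - a x) = (\<lambda>x. - vd a x)"
  using vd_mult[OF smooth_periodic_const[of "-1"], of a] by simp

lemma vd_diff: "smooth_periodic a \<Longrightarrow> smooth_periodic b \<Longrightarrow> vd (\<lambda>x. a x - b x) = (\<lambda>x. vd a x - vd b x)"
  using vd_add[OF _ smooth_periodic_minus[of b], of a] vd_minus[of b] by simp

lemma vd_divide: "smooth_periodic a \<Longrightarrow> vd (\<lambda>x. a x / c) = (\<lambda>x. vd a x / c)"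
  using vd_mult[OF _ smooth_periodic_const[of "1/c"], of a] by simp

lemmas smooth_periodic_intros [simp] = smooth_periodic_const smooth_periodic_add smooth_periodic_mult
  smooth_periodic_minus smooth_periodic_diff smooth_periodic_divide smooth_periodic_vd
lemmas vd_simps [simp] = vd_add vd_mult vd_minus vd_diff vd_divide

lemma smooth_circ_iff_smooth_periodic: "smooth_circ \<phi> \<longleftrightarrow> smooth_periodic \<phi>"
proof
  assume "smooth_circ \<phi>"
  then obtain d where d: "d 0 = \<phi>" "\<And>j x. (d j has_vector_derivative d (Suc j) x) (at x)"
    and per: "\<forall>x. \<phi> (x + 2 * pi) = \<phi> x" unfolding smooth_circ_def by blast
  have "differentiable_upto j (d i)" for j i
  proof (induction j arbitrary: i)
    case (Suc j)
    have "vd (d i) = d (Suc i)" using d(2) vd_eqI by blast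
    then show ?case using Suc d(2) by (auto intro: differentiableI_vector)
  qed simp
  then show "smooth_periodic \<phi>" using d per unfolding smooth_periodic_def by auto
next
  assume s: "smooth_periodic \<phi>"
  have sj: "smooth_periodic ((vd ^^ j) \<phi>)" for j by (induction j) (auto simp: s)
  show "smooth_circ \<phi>" unfolding smooth_circ_def
  proof (intro conjI exI[of _ "\<lambda>j. (vd ^^ j) \<phi>"] allI)
    show "\<phi> (x + 2 * pi) = \<phi> x" for x using s unfolding smooth_periodic_def by auto
    show "((vd ^^ j) \<phi> has_vector_derivative (vd ^^ Suc j) \<phi> x) (at x)" for j x
      using has_vector_derivative_vd[OF smooth_periodic_differentiable[OF sj[of j]]] by simp
  qed simp
qed

section \<open>The superalgebra of superfunctions\<close>

definition sfun_one :: sfun where "sfun_one = SF (\<lambda>_. 1) (\<lambda>_. 0) (\<lambda>_. 0) (\<lambda>_. 0)"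

definition ginv :: "sfun \<Rightarrow> sfun" where
  "ginv f = SF (c0 f) (\<lambda>x. - c1 f x) (\<lambda>x. - c2 f x) (c12 f)"

definition ginv_if :: "bool \<Rightarrow> sfun \<Rightarrow> sfun" where
  "ginv_if b c = (if b then ginv c else c)"

lemmas sfun_defs = zero_sfun_def plus_sfun_def uminus_sfun_def minus_sfun_def gmul_def scal_def
  xi1_def xi2_def dx_def dxi1_def dxi2_def Db1_def Db2_def ev_part_def od_part_def sfun_one_def
  ginv_def

lemma smooth_sf_SF [simp]:
  "smooth_sf (SF a b c d) \<longleftrightarrow>
     smooth_periodic a \<and> smooth_periodic b \<and> smooth_periodic c \<and> smooth_periodic d"
  by (simp add: smooth_sf_def smooth_circ_iff_smooth_periodic)

lemma smooth_sf_coeffs [simp]: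
  "smooth_sf f \<Longrightarrow> smooth_periodic (c0 f)" "smooth_sf f \<Longrightarrow> smooth_periodic (c1 f)"
  "smooth_sf f \<Longrightarrow> smooth_periodic (c2 f)" "smooth_sf f \<Longrightarrow> smooth_periodic (c12 f)"
  by (simp_all add: smooth_sf_def smooth_circ_iff_smooth_periodic)

lemma smooth_sf_ops [simp]:
  "smooth_sf 0" "smooth_sf sfun_one"
  "smooth_sf f \<Longrightarrow> smooth_sf g \<Longrightarrow> smooth_sf (f + g)"
  "smooth_sf f \<Longrightarrow> smooth_sf g \<Longrightarrow> smooth_sf (f - g)"
  "smooth_sf f \<Longrightarrow> smooth_sf (- f)"
  "smooth_sf f \<Longrightarrow> smooth_sf g \<Longrightarrow> smooth_sf (f \<star> g)"
  "smooth_sf f \<Longrightarrow> smooth_sf (scal c f)"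
  "smooth_sf f \<Longrightarrow> smooth_sf (dx f)"
  "smooth_sf f \<Longrightarrow> smooth_sf (Db1 f)"
  "smooth_sf f \<Longrightarrow> smooth_sf (Db2 f)"
  "smooth_sf f \<Longrightarrow> smooth_sf (ev_part f)"
  "smooth_sf f \<Longrightarrow> smooth_sf (od_part f)"
  "smooth_sf f \<Longrightarrow> smooth_sf (ginv f)"
  "smooth_sf f \<Longrightarrow> smooth_sf (ginv_if b f)"
  by (simp_all add: sfun_defs ginv_if_def)

lemma smooth_sf_sum [simp]: "(\<And>i. i \<in> I \<Longrightarrow> smooth_sf (h i)) \<Longrightarrow> smooth_sf (sum h I)"
  by (induction I rule: infinite_finite_induct) auto

lemma gmul_assoc: "(f \<star> g) \<star> h = f \<star> (g \<star> h)"
  by (simp add: sfun_defs algebra_simps)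

lemma gmul_distrib:
  "(f + g) \<star> h = f \<star> h + g \<star> h" "h \<star> (f + g) = h \<star> f + h \<star> g"
  "(f - g) \<star> h = f \<star> h - g \<star> h" "h \<star> (f - g) = h \<star> f - h \<star> g"
  "(- f) \<star> h = - (f \<star> h)" "h \<star> (- f) = - (h \<star> f)"
  by (simp_all add: sfun_defs algebra_simps)

lemma gmul_zero [simp]: "0 \<star> f = 0" "f \<star> 0 = 0"
  by (simp_all add: sfun_defs)

lemma gmul_one [simp]: "sfun_one \<star> f = f"
  by (simp add: sfun_defs)

lemma gmul_scal: "scal c f \<star> g = scal c (f \<star> g)" "f \<star> scal c g = scal c (f \<star> g)"
  by (simp_all add: sfun_defs algebra_simps)

lemma scal_distrib:
  "scal c (f + g) = scal c f + scal c g" "scal c (f - g) = scal c f - scal c g"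
  "scal (c + d) f = scal c f + scal d f" "scal (c - d) f = scal c f - scal d f"
  "scal c (- f) = - scal c f"
  by (simp_all add: sfun_defs algebra_simps)

lemma scal_simps [simp]:
  "scal 1 f = f" "scal 0 f = 0" "scal c 0 = 0" "scal (-1) f = - f"
  "scal c (scal d f) = scal (c * d) f"
  by (simp_all add: sfun_defs mult.assoc)

lemma scal_2: "scal 2 f = f + f"
  by (simp add: sfun_defs algebra_simps fun_eq_iff)

lemma gmul_sum_right: "c \<star> sum h I = (\<Sum>i\<in>I. c \<star> h i)"
  by (induction I rule: infinite_finite_induct) (auto simp: gmul_distrib)

lemma scal_sum: "scal c (sum h I) = (\<Sum>i\<in>I. scal c (h i))"
  by (induction I rule: infinite_finite_induct) (auto simp: scal_distrib)

lemma dx_rules: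
  "dx 0 = 0"
  "smooth_sf f \<Longrightarrow> smooth_sf g \<Longrightarrow> dx (f + g) = dx f + dx g"
  "smooth_sf f \<Longrightarrow> smooth_sf g \<Longrightarrow> dx (f - g) = dx f - dx g"
  "smooth_sf f \<Longrightarrow> dx (- f) = - dx f"
  "smooth_sf f \<Longrightarrow> dx (scal c f) = scal c (dx f)"
  "smooth_sf f \<Longrightarrow> smooth_sf g \<Longrightarrow> dx (f \<star> g) = dx f \<star> g + f \<star> dx g"
  by (simp_all add: sfun_defs algebra_simps)

lemma Db_rules:
  "Db1 0 = 0" "Db2 0 = 0"
  "smooth_sf f \<Longrightarrow> smooth_sf g \<Longrightarrow> Db1 (f + g) = Db1 f + Db1 g"
  "smooth_sf f \<Longrightarrow> smooth_sf g \<Longrightarrow> Db1 (f - g) = Db1 f - Db1 g"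
  "smooth_sf f \<Longrightarrow> Db1 (- f) = - Db1 f"
  "smooth_sf f \<Longrightarrow> Db1 (scal c f) = scal c (Db1 f)"
  "smooth_sf f \<Longrightarrow> smooth_sf g \<Longrightarrow> Db1 (f \<star> g) = Db1 f \<star> g + ginv f \<star> Db1 g"
  "smooth_sf f \<Longrightarrow> smooth_sf g \<Longrightarrow> Db2 (f + g) = Db2 f + Db2 g"
  "smooth_sf f \<Longrightarrow> smooth_sf g \<Longrightarrow> Db2 (f - g) = Db2 f - Db2 g"
  "smooth_sf f \<Longrightarrow> Db2 (- f) = - Db2 f"
  "smooth_sf f \<Longrightarrow> Db2 (scal c f) = scal c (Db2 f)"
  "smooth_sf f \<Longrightarrow> smooth_sf g \<Longrightarrow> Db2 (f \<star> g) = Db2 f \<star> g + ginv f \<star> Db2 g"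
  by (simp_all add: sfun_defs algebra_simps fun_eq_iff)

lemma Db_relations:
  "smooth_sf f \<Longrightarrow> Db1 (Db1 f) = - dx f"
  "smooth_sf f \<Longrightarrow> Db2 (Db2 f) = - dx f"
  "smooth_sf f \<Longrightarrow> Db2 (Db1 f) = - Db1 (Db2 f)"
  "smooth_sf f \<Longrightarrow> dx (Db1 f) = Db1 (dx f)"
  "smooth_sf f \<Longrightarrow> dx (Db2 f) = Db2 (dx f)"
  by (simp_all add: sfun_defs algebra_simps)

lemma ginv_rules:
  "ginv (ginv f) = f" "ginv 0 = 0" "ginv (f + g) = ginv f + ginv g" "ginv (f - g) = ginv f - ginv g"
  "ginv (- f) = - ginv f" "ginv (scal c f) = scal c (ginv f)" "ginv (f \<star> g) = ginv f \<star> ginv g"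
  "smooth_sf f \<Longrightarrow> ginv (dx f) = dx (ginv f)"
  "smooth_sf f \<Longrightarrow> ginv (Db1 f) = - Db1 (ginv f)"
  "smooth_sf f \<Longrightarrow> ginv (Db2 f) = - Db2 (ginv f)"
  by (simp_all add: sfun_defs algebra_simps)

lemma ev_od_part:
  "ev_part f + od_part f = f" "ev_part f - od_part f = ginv f"
  by (simp_all add: sfun_defs fun_eq_iff)

lemma parity_cases:
  assumes "has_parity b f" "smooth_sf f"
  obtains p q where "smooth_periodic p" "smooth_periodic q" "b" "f = SF (\<lambda>_. 0) p q (\<lambda>_. 0)"
  | p q where "smooth_periodic p" "smooth_periodic q" "\<not> b" "f = SF p (\<lambda>_. 0) (\<lambda>_. 0) q"
proof -
  have "(b \<and> f = SF (\<lambda>_. 0) (c1 f) (c2 f) (\<lambda>_. 0)) \<or> (\<not> b \<and> f = SF (c0 f) (\<lambda>_. 0) (\<lambda>_. 0) (c12 f))"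
    using assms(1) unfolding has_parity_def by (cases b) (auto simp: sfun.expand)
  then show thesis using that assms(2) by (metis smooth_sf_coeffs)
qed

lemma psign_square [simp]: "psign b * psign b = 1"
  by (simp add: psign_def)

lemma ginv_parity: "has_parity b p \<Longrightarrow> ginv p = scal (psign b) p"
  unfolding has_parity_def by (cases b) (simp_all add: sfun_defs psign_def fun_eq_iff)

lemma ginv_if_gmul_commute: "has_parity b p \<Longrightarrow> ginv_if b c \<star> p = p \<star> c"
  unfolding has_parity_def ginv_if_def by (cases b) (simp_all add: sfun_defs algebra_simps fun_eq_iff)

lemma has_parity_dx: "has_parity b f \<Longrightarrow> has_parity b (dx f)"
  unfolding has_parity_def by (cases b) (simp_all add: sfun_defs)

lemma has_parity_Db1_Db2: "has_parity b f \<Longrightarrow> has_parity b (Db1 (Db2 f))"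
  unfolding has_parity_def by (cases b) (simp_all add: sfun_defs)

section \<open>Iterated derivatives and monomial operators\<close>

lemma smooth_sf_dxpow [simp]: "smooth_sf f \<Longrightarrow> smooth_sf ((dx ^^ l) f)"
  by (induction l) auto

lemma smooth_sf_Db1pow [simp]: "smooth_sf f \<Longrightarrow> smooth_sf ((Db1 ^^ l) f)"
  by (induction l) auto

lemma smooth_sf_Db2pow [simp]: "smooth_sf f \<Longrightarrow> smooth_sf ((Db2 ^^ l) f)"
  by (induction l) auto

lemma smooth_sf_mono_op [simp]: "smooth_sf f \<Longrightarrow> smooth_sf (mono_op l m n f)"
  by (simp add: mono_op_def)

lemma dxpow_linear:
  "smooth_sf x \<Longrightarrow> smooth_sf y \<Longrightarrow> (dx ^^ n) (x + y) = (dx ^^ n) x + (dx ^^ n) y"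
  "smooth_sf x \<Longrightarrow> smooth_sf y \<Longrightarrow> (dx ^^ n) (x - y) = (dx ^^ n) x - (dx ^^ n) y"
  "smooth_sf x \<Longrightarrow> (dx ^^ n) (- x) = - (dx ^^ n) x"
  "smooth_sf x \<Longrightarrow> (dx ^^ n) (scal c x) = scal c ((dx ^^ n) x)"
  "(dx ^^ n) 0 = 0"
  by (induction n) (auto simp: dx_rules)

lemma Db1pow_linear:
  "smooth_sf x \<Longrightarrow> smooth_sf y \<Longrightarrow> (Db1 ^^ n) (x + y) = (Db1 ^^ n) x + (Db1 ^^ n) y"
  "smooth_sf x \<Longrightarrow> smooth_sf y \<Longrightarrow> (Db1 ^^ n) (x - y) = (Db1 ^^ n) x - (Db1 ^^ n) y"
  "smooth_sf x \<Longrightarrow> (Db1 ^^ n) (scal c x) = scal c ((Db1 ^^ n) x)"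
  by (induction n) (auto simp: Db_rules)

lemma Db2pow_linear:
  "smooth_sf x \<Longrightarrow> smooth_sf y \<Longrightarrow> (Db2 ^^ n) (x + y) = (Db2 ^^ n) x + (Db2 ^^ n) y"
  "smooth_sf x \<Longrightarrow> smooth_sf y \<Longrightarrow> (Db2 ^^ n) (x - y) = (Db2 ^^ n) x - (Db2 ^^ n) y"
  "smooth_sf x \<Longrightarrow> (Db2 ^^ n) (scal c x) = scal c ((Db2 ^^ n) x)"
  by (induction n) (auto simp: Db_rules)

lemma mono_op_linear:
  "smooth_sf x \<Longrightarrow> smooth_sf y \<Longrightarrow> mono_op l m n (x + y) = mono_op l m n x + mono_op l m n y"
  "smooth_sf x \<Longrightarrow> smooth_sf y \<Longrightarrow> mono_op l m n (x - y) = mono_op l m n x - mono_op l m n y"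
  "smooth_sf x \<Longrightarrow> mono_op l m n (scal c x) = scal c (mono_op l m n x)"
  by (simp_all add: mono_op_def Db1pow_linear Db2pow_linear dxpow_linear del: funpow.simps)

lemma dxpow_Db1: "smooth_sf h \<Longrightarrow> (dx ^^ l) (Db1 h) = Db1 ((dx ^^ l) h)"
  by (induction l) (auto simp: Db_relations)

lemma dxpow_Db2: "smooth_sf h \<Longrightarrow> (dx ^^ l) (Db2 h) = Db2 ((dx ^^ l) h)"
  by (induction l) (auto simp: Db_relations)

lemma dx_dxpow: "dx ((dx ^^ l) h) = (dx ^^ l) (dx h)"
  by (simp add: funpow_swap1)

lemma ginv_dxpow: "smooth_sf x \<Longrightarrow> ginv ((dx ^^ l) x) = (dx ^^ l) (ginv x)"
  by (induction l) (auto simp: ginv_rules)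

lemma less_2_cases: "m < (2::nat) \<Longrightarrow> m = 0 \<or> m = 1"
  by auto

lemma mono_op_Suc: "mono_op (Suc l) m n g = dx (mono_op l m n g)"
  by (simp add: mono_op_def)

lemma mono_op_split: "mono_op l m n g = (dx ^^ l) (mono_op 0 m n g)"
  by (simp add: mono_op_def)

lemma Db1_mono_op: "smooth_sf g \<Longrightarrow> m < 2 \<Longrightarrow>
  Db1 (mono_op l m n g) = (if m = 0 then mono_op l 1 n g else - mono_op (Suc l) 0 n g)"
  by (drule less_2_cases, elim disjE)
     (simp_all add: mono_op_def dxpow_Db1[symmetric] Db_relations dxpow_linear dx_dxpow)

lemma Db2_mono_op: "smooth_sf g \<Longrightarrow> m < 2 \<Longrightarrow> n < 2 \<Longrightarrow>
  Db2 (mono_op l m n g) =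
    (if m = 0 then (if n = 0 then mono_op l 0 1 g else - mono_op (Suc l) 0 0 g)
     else (if n = 0 then - mono_op l 1 1 g else mono_op (Suc l) 1 0 g))"
  by (drule less_2_cases, drule less_2_cases, elim disjE)
     (simp_all add: mono_op_def dxpow_Db2[symmetric] Db_relations dxpow_linear Db_rules dx_dxpow)

lemma ginv_mono_op:
  assumes "smooth_sf k" "m < 2" "n < 2"
  shows "ginv (mono_op l m n (ginv k)) = scal (psign (odd (m + n))) (mono_op l m n k)"
  using less_2_cases[OF assms(2)] less_2_cases[OF assms(3)] assms(1)
  by (auto simp: mono_op_def ginv_dxpow ginv_rules psign_def dxpow_linear Db_rules)

section \<open>The filtration by order\<close>

lemma additive_on_smooth_sum:
  assumes "\<And>x y. smooth_sf x \<Longrightarrow> smooth_sf y \<Longrightarrow> \<Phi> (x + y) = \<Phi> x + \<Phi> y" "\<Phi> 0 = 0"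
    and "finite I" "\<And>i. i \<in> I \<Longrightarrow> smooth_sf (h i)"
  shows "\<Phi> (sum h I) = (\<Sum>i\<in>I. \<Phi> (h i))"
  using assms(3,4) by (induction I rule: finite_induct) (auto simp: assms(1,2))

definition diffop :: "nat \<Rightarrow> (nat \<Rightarrow> nat \<Rightarrow> nat \<Rightarrow> sfun) \<Rightarrow> sfun \<Rightarrow> sfun" where
  "diffop K a g = (\<Sum>l\<le>K. \<Sum>m<2. \<Sum>n<2. if 2 * l + m + n \<le> K then a l m n \<star> mono_op l m n g else 0)"

lemma smooth_sf_diffop [simp]:
  "(\<And>l m n. smooth_sf (a l m n)) \<Longrightarrow> smooth_sf g \<Longrightarrow> smooth_sf (diffop K a g)"
  by (simp add: diffop_def)

lemma in_D_iff_diffop: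
  "in_D K A \<longleftrightarrow>
    (\<exists>a. (\<forall>l m n. smooth_sf (a l m n)) \<and> (\<forall>g. smooth_sf g \<longrightarrow> A g = diffop K a g))"
  by (simp add: in_D_def diffop_def)

lemma in_D_cong: "in_D K A \<Longrightarrow> (\<And>g. smooth_sf g \<Longrightarrow> A g = B g) \<Longrightarrow> in_D K B"
  unfolding in_D_iff_diffop by (elim exE conjE) (rule exI, rule conjI, assumption, simp)

lemma in_D_smooth: "in_D K A \<Longrightarrow> smooth_sf g \<Longrightarrow> smooth_sf (A g)"
  unfolding in_D_iff_diffop by auto

lemma in_D_zero: "in_D K (\<lambda>g. 0)"
proof -
  have "(\<Sum>l\<le>K. \<Sum>m<2. \<Sum>n<2. if 2 * l + m + n \<le> K then (0::sfun) \<star> mono_op l m n g else 0) = 0" for g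
    by (simp cong: if_cong)
  then show ?thesis unfolding in_D_def by (intro exI[of _ "\<lambda>_ _ _. 0"]) simp
qed

lemma in_D_add:
  assumes "in_D K A" "in_D K B" shows "in_D K (\<lambda>g. A g + B g)"
proof -
  obtain a where a: "\<forall>l m n. smooth_sf (a l m n)" "\<forall>g. smooth_sf g \<longrightarrow> A g = diffop K a g"
    using assms(1) unfolding in_D_iff_diffop by blast
  obtain b where b: "\<forall>l m n. smooth_sf (b l m n)" "\<forall>g. smooth_sf g \<longrightarrow> B g = diffop K b g"
    using assms(2) unfolding in_D_iff_diffop by blast
  show ?thesis unfolding in_D_iff_diffop
  proof (intro exI[of _ "\<lambda>l m n. a l m n + b l m n"] conjI allI impI)
    show "smooth_sf (a l m n + b l m n)" for l m n using a b by simp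
    fix g assume "smooth_sf g"
    then show "A g + B g = diffop K (\<lambda>l m n. a l m n + b l m n) g"
      using a b by (simp add: diffop_def gmul_distrib sum.distrib[symmetric] if_distrib)
         (intro sum.cong refl, auto simp: gmul_distrib)
  qed
qed

lemma in_D_lmul:
  assumes "in_D K A" "smooth_sf c" shows "in_D K (\<lambda>g. c \<star> A g)"
proof -
  obtain a where a: "\<forall>l m n. smooth_sf (a l m n)" "\<forall>g. smooth_sf g \<longrightarrow> A g = diffop K a g"
    using assms(1) unfolding in_D_iff_diffop by blast
  show ?thesis unfolding in_D_iff_diffop
  proof (intro exI[of _ "\<lambda>l m n. c \<star> a l m n"] conjI allI impI)
    show "smooth_sf (c \<star> a l m n)" for l m n using a assms by simp
    fix g assume "smooth_sf g"
    then show "c \<star> A g = diffop K (\<lambda>l m n. c \<star> a l m n) g"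
      using a by (simp add: diffop_def gmul_sum_right gmul_assoc if_distrib cong: if_cong)
  qed
qed

lemma in_D_scal:
  assumes "in_D K A" shows "in_D K (\<lambda>g. scal c (A g))"
proof -
  obtain a where a: "\<forall>l m n. smooth_sf (a l m n)" "\<forall>g. smooth_sf g \<longrightarrow> A g = diffop K a g"
    using assms(1) unfolding in_D_iff_diffop by blast
  show ?thesis unfolding in_D_iff_diffop
  proof (intro exI[of _ "\<lambda>l m n. scal c (a l m n)"] conjI allI impI)
    show "smooth_sf (scal c (a l m n))" for l m n using a assms by simp
    fix g assume "smooth_sf g"
    then show "scal c (A g) = diffop K (\<lambda>l m n. scal c (a l m n)) g"
      using a by (simp add: diffop_def scal_sum gmul_scal if_distrib cong: if_cong)
  qed
qed

lemma in_D_uminus: "in_D K A \<Longrightarrow> in_D K (\<lambda>g. - A g)"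
  using in_D_scal[of K A "-1"] by simp

lemma in_D_diff: "in_D K A \<Longrightarrow> in_D K B \<Longrightarrow> in_D K (\<lambda>g. A g - B g)"
  using in_D_add[OF _ in_D_uminus, of K A B] by simp

lemma in_D_sum: "finite I \<Longrightarrow> (\<And>i. i \<in> I \<Longrightarrow> in_D K (T i)) \<Longrightarrow> in_D K (\<lambda>g. \<Sum>i\<in>I. T i g)"
  by (induction I rule: finite_induct) (auto intro: in_D_zero in_D_add)

lemma in_D_if: "(P \<Longrightarrow> in_D K A) \<Longrightarrow> in_D K (\<lambda>g. if P then A g else 0)"
  by (cases P) (auto intro: in_D_zero)

lemma in_D_mono:
  assumes "in_D K A" "K \<le> K'" shows "in_D K' A"
proof -
  obtain a where a: "\<forall>l m n. smooth_sf (a l m n)" "\<forall>g. smooth_sf g \<longrightarrow> A g = diffop K a g"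
    using assms(1) unfolding in_D_iff_diffop by blast
  show ?thesis unfolding in_D_iff_diffop
  proof (intro exI[of _ "\<lambda>l m n. if 2 * l + m + n \<le> K then a l m n else 0"] conjI allI impI)
    show "smooth_sf (if 2 * l + m + n \<le> K then a l m n else 0)" for l m n using a by simp
    fix g assume g: "smooth_sf g"
    have "diffop K' (\<lambda>l m n. if 2 * l + m + n \<le> K then a l m n else 0) g
       = (\<Sum>l\<le>K'. \<Sum>m<2. \<Sum>n<2. if 2 * l + m + n \<le> K then a l m n \<star> mono_op l m n g else 0)"
      unfolding diffop_def using assms(2) by (intro sum.cong refl) auto
    also have "\<dots> = (\<Sum>l\<le>K. \<Sum>m<2. \<Sum>n<2. if 2 * l + m + n \<le> K then a l m n \<star> mono_op l m n g else 0)"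
      using assms(2) by (intro sum.mono_neutral_right) auto
    finally show "A g = diffop K' (\<lambda>l m n. if 2 * l + m + n \<le> K then a l m n else 0) g"
      using a g by (simp add: diffop_def)
  qed
qed

lemma in_D_monomial:
  assumes "m < 2" "n < 2" "2 * l + m + n \<le> K" "smooth_sf c"
  shows "in_D K (\<lambda>g. c \<star> mono_op l m n g)"
  unfolding in_D_iff_diffop
proof (intro exI[of _ "\<lambda>l' m' n'. if l' = l \<and> m' = m \<and> n' = n then c else 0"] conjI allI impI)
  show "smooth_sf (if l' = l \<and> m' = m \<and> n' = n then c else 0)" for l' m' n' using assms by simp
  fix g assume g: "smooth_sf g"
  have mn: "m = 0 \<or> m = 1" "n = 0 \<or> n = 1" using assms(1,2) by auto
  have l: "l \<le> K" using assms(3) by auto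
  have inner: "(\<Sum>m'<2. \<Sum>n'<2. if 2 * l' + m' + n' \<le> K
      then (if l' = l \<and> m' = m \<and> n' = n then c else 0) \<star> mono_op l' m' n' g else 0)
      = (if l' = l then c \<star> mono_op l m n g else 0)" for l'
    using mn assms(3) by (auto simp: numeral_2_eq_2 lessThan_Suc)
  have "diffop K (\<lambda>l' m' n'. if l' = l \<and> m' = m \<and> n' = n then c else 0) g
     = (\<Sum>l'\<le>K. if l' = l then c \<star> mono_op l m n g else 0)"
    unfolding diffop_def inner ..
  also have "\<dots> = c \<star> mono_op l m n g"
    using l by (subst sum.delta) auto
  finally show "c \<star> mono_op l m n g
      = diffop K (\<lambda>l' m' n'. if l' = l \<and> m' = m \<and> n' = n then c else 0) g" ..
qed

lemma in_D_termwise: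
  assumes A: "in_D K A" and Psi: "\<And>g. smooth_sf g \<Longrightarrow> smooth_sf (\<Psi> g)"
    and add: "\<And>x y. smooth_sf x \<Longrightarrow> smooth_sf y \<Longrightarrow> \<Phi> (x + y) = \<Phi> x + \<Phi> y" and zero: "\<Phi> 0 = 0"
    and mon: "\<And>l m n c. m < 2 \<Longrightarrow> n < 2 \<Longrightarrow> 2 * l + m + n \<le> K \<Longrightarrow> smooth_sf c \<Longrightarrow>
                 in_D K' (\<lambda>g. \<Phi> (c \<star> mono_op l m n (\<Psi> g)))"
  shows "in_D K' (\<lambda>g. \<Phi> (A (\<Psi> g)))"
proof -
  obtain a where a: "\<forall>l m n. smooth_sf (a l m n)" "\<forall>g. smooth_sf g \<longrightarrow> A g = diffop K a g"
    using A unfolding in_D_iff_diffop by blast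
  have eq: "\<Phi> (A (\<Psi> g)) = (\<Sum>l\<le>K. \<Sum>m<2. \<Sum>n<2.
      if 2 * l + m + n \<le> K then \<Phi> (a l m n \<star> mono_op l m n (\<Psi> g)) else 0)"
    if g: "smooth_sf g" for g
  proof -
    have sg: "smooth_sf (\<Psi> g)" using Psi g .
    have "\<Phi> (A (\<Psi> g)) = \<Phi> (diffop K a (\<Psi> g))" using a sg by simp
    also have "\<dots> = (\<Sum>l\<le>K. \<Phi> (\<Sum>m<2. \<Sum>n<2.
        if 2 * l + m + n \<le> K then a l m n \<star> mono_op l m n (\<Psi> g) else 0))"
      unfolding diffop_def by (rule additive_on_smooth_sum[OF add zero]) (use a sg in auto)
    also have "\<dots> = (\<Sum>l\<le>K. \<Sum>m<2. \<Phi> (\<Sum>n<2.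
        if 2 * l + m + n \<le> K then a l m n \<star> mono_op l m n (\<Psi> g) else 0))"
      by (intro sum.cong refl additive_on_smooth_sum[OF add zero]) (use a sg in auto)
    also have "\<dots> = (\<Sum>l\<le>K. \<Sum>m<2. \<Sum>n<2.
        \<Phi> (if 2 * l + m + n \<le> K then a l m n \<star> mono_op l m n (\<Psi> g) else 0))"
      by (intro sum.cong refl additive_on_smooth_sum[OF add zero]) (use a sg in auto)
    finally show ?thesis by (simp add: if_distrib zero cong: if_cong)
  qed
  show ?thesis
    by (rule in_D_cong[OF _ eq[symmetric]], (intro in_D_sum in_D_if mon; (use a in auto)?), simp)
qed

lemma if_add_zero: "(if P then u + v else (0::sfun)) = (if P then u else 0) + (if P then v else 0)"
  by simp

lemma if_diff_zero: "(if P then u - v else (0::sfun)) = (if P then u else 0) - (if P then v else 0)"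
  by simp

lemma diffop_linear:
  assumes "\<And>l m n. smooth_sf (a l m n)" "smooth_sf x" "smooth_sf y"
  shows "diffop K a (x + y) = diffop K a x + diffop K a y"
    and "diffop K a (x - y) = diffop K a x - diffop K a y"
  using assms by (simp_all add: diffop_def mono_op_linear gmul_distrib if_add_zero if_diff_zero
      sum.distrib sum_subtractf
     cong: if_cong)

lemma in_D_linear:
  assumes "in_D K A" "smooth_sf x" "smooth_sf y"
  shows "A (x + y) = A x + A y" "A (x - y) = A x - A y"
proof -
  obtain a where a: "\<forall>l m n. smooth_sf (a l m n)" "\<forall>g. smooth_sf g \<longrightarrow> A g = diffop K a g"
    using assms(1) unfolding in_D_iff_diffop by blast
  show "A (x + y) = A x + A y" "A (x - y) = A x - A y"
    using a assms diffop_linear[of a x y K] by simp_all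
qed

lemma in_D_mono_op: "m < 2 \<Longrightarrow> n < 2 \<Longrightarrow> 2 * l + m + n \<le> K \<Longrightarrow> in_D K (mono_op l m n)"
  using in_D_monomial[of m n l K sfun_one] by simp

lemma in_D_gmul: "smooth_sf c \<Longrightarrow> in_D K (\<lambda>g. c \<star> g)"
  using in_D_monomial[of 0 0 0 K c] by (simp add: mono_op_def)
lemma in_D_Db1: "1 \<le> K \<Longrightarrow> in_D K Db1"
  using in_D_mono_op[of 1 0 0 K] by (simp add: mono_op_def[abs_def])
lemma in_D_Db2: "1 \<le> K \<Longrightarrow> in_D K Db2"
  using in_D_mono_op[of 0 1 0 K] by (simp add: mono_op_def[abs_def])

lemma in_D_derivation_comp:
  assumes A: "in_D K A"
    and add: "\<And>x y. smooth_sf x \<Longrightarrow> smooth_sf y \<Longrightarrow> D (x + y) = D x + D y" and zero: "D 0 = 0"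
    and smooth: "\<And>x. smooth_sf x \<Longrightarrow> smooth_sf (D x)" "\<And>c. smooth_sf c \<Longrightarrow> smooth_sf (\<sigma> c)"
    and leibniz: "\<And>c h. smooth_sf c \<Longrightarrow> smooth_sf h \<Longrightarrow> D (c \<star> h) = D c \<star> h + \<sigma> c \<star> D h"
    and monomial: "\<And>l m n. m < 2 \<Longrightarrow> n < 2 \<Longrightarrow> in_D (2 * l + m + n + d) (\<lambda>g. D (mono_op l m n g))"
  shows "in_D (K + d) (\<lambda>g. D (A g))"
proof -
  have "in_D (K + d) (\<lambda>g. D (c \<star> mono_op l m n g))"
    if "m < 2" "n < 2" "2 * l + m + n \<le> K" "smooth_sf c" for l m n c
  proof -
    have "in_D (K + d) (\<lambda>g. D c \<star> mono_op l m n g + \<sigma> c \<star> D (mono_op l m n g))"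
      using that smooth
      by (intro in_D_add in_D_monomial in_D_lmul in_D_mono[OF monomial[of m n l]]) auto
    then show ?thesis
      by (rule in_D_cong) (simp add: leibniz that)
  qed
  then show ?thesis
    using in_D_termwise[OF A, of "\<lambda>g. g" D] add zero by simp
qed

lemma in_D_dx_comp: "in_D K A \<Longrightarrow> in_D (K + 2) (\<lambda>g. dx (A g))"
proof (erule in_D_derivation_comp[where \<sigma> = "\<lambda>c. c"])
  show "in_D (2 * l + m + n + 2) (\<lambda>g. dx (mono_op l m n g))" if "m < 2" "n < 2" for l m n
    using in_D_mono_op[of m n "Suc l"] that by (simp add: mono_op_Suc[abs_def])
qed (simp_all add: dx_rules)

lemma in_D_Db1_comp: "in_D K A \<Longrightarrow> in_D (K + 1) (\<lambda>g. Db1 (A g))"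
proof (erule in_D_derivation_comp[where \<sigma> = ginv])
  fix l m n :: nat assume "m < 2" "n < 2"
  then consider "m = 0" | "m = 1" by linarith
  then show "in_D (2 * l + m + n + 1) (\<lambda>g. Db1 (mono_op l m n g))"
  proof cases
    case 1
    then show ?thesis using \<open>n < 2\<close>
      by (intro in_D_cong[OF in_D_mono_op[of 1 n l]]) (auto simp: Db1_mono_op)
  next
    case 2
    then show ?thesis using \<open>n < 2\<close>
      by (intro in_D_cong[OF in_D_uminus[OF in_D_mono_op[of 0 n "Suc l"]]]) (auto simp: Db1_mono_op)
  qed
qed (simp_all add: Db_rules)

lemma in_D_Db2_comp: "in_D K A \<Longrightarrow> in_D (K + 1) (\<lambda>g. Db2 (A g))"
proof (erule in_D_derivation_comp[where \<sigma> = ginv])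
  fix l m n :: nat assume "m < 2" "n < 2"
  then consider "m = 0" "n = 0" | "m = 0" "n = 1" | "m = 1" "n = 0" | "m = 1" "n = 1" by linarith
  then show "in_D (2 * l + m + n + 1) (\<lambda>g. Db2 (mono_op l m n g))"
  proof cases
    case 1
    then show ?thesis
      by (intro in_D_cong[OF in_D_mono_op[of 0 1 l]]) (auto simp: Db2_mono_op)
  next
    case 2
    then show ?thesis
      by (intro in_D_cong[OF in_D_uminus[OF in_D_mono_op[of 0 0 "Suc l"]]]) (auto simp: Db2_mono_op)
  next
    case 3
    then show ?thesis
      by (intro in_D_cong[OF in_D_uminus[OF in_D_mono_op[of 1 1 l]]]) (auto simp: Db2_mono_op)
  next
    case 4
    then show ?thesis
      by (intro in_D_cong[OF in_D_mono_op[of 1 0 "Suc l"]]) (auto simp: Db2_mono_op)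
  qed
qed (simp_all add: Db_rules)

lemma in_D_dxpow_comp: "in_D K A \<Longrightarrow> in_D (K + 2 * l) (\<lambda>g. (dx ^^ l) (A g))"
proof (induction l)
  case 0 then show ?case by simp
next
  case (Suc l)
  then show ?case using in_D_dx_comp[OF Suc.IH[OF Suc.prems]] by (simp add: add.assoc)
qed

lemma in_D_Db1pow_comp: "in_D K A \<Longrightarrow> in_D (K + m) (\<lambda>g. (Db1 ^^ m) (A g))"
proof (induction m)
  case 0 then show ?case by simp
next
  case (Suc m)
  then show ?case using in_D_Db1_comp[OF Suc.IH[OF Suc.prems]] by simp
qed

lemma in_D_Db2pow_comp: "in_D K A \<Longrightarrow> in_D (K + m) (\<lambda>g. (Db2 ^^ m) (A g))"
proof (induction m)
  case 0 then show ?case by simp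
next
  case (Suc m)
  then show ?case using in_D_Db2_comp[OF Suc.IH[OF Suc.prems]] by simp
qed

lemma in_D_mono_op_comp: "in_D K A \<Longrightarrow> in_D (K + 2 * l + m + n) (\<lambda>g. mono_op l m n (A g))"
proof -
  assume A: "in_D K A"
  have "in_D (K + n) (\<lambda>g. (Db2^^n) (A g))" by (rule in_D_Db2pow_comp[OF A])
  then have "in_D (K + n + m) (\<lambda>g. (Db1^^m) ((Db2^^n) (A g)))" by (rule in_D_Db1pow_comp)
  then have "in_D (K + n + m + 2 * l) (\<lambda>g. (dx^^l) ((Db1^^m) ((Db2^^n) (A g))))"
    by (rule in_D_dxpow_comp)
  then show ?thesis unfolding mono_op_def by (simp add: algebra_simps)
qed

lemma in_D_comp:
  assumes R: "in_D K1 R" and M: "in_D K2 M" shows "in_D (K1 + K2) (\<lambda>g. R (M g))"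
proof -
  have "in_D (K1 + K2) (\<lambda>g. c \<star> mono_op l m n (M g))"
    if "2 * l + m + n \<le> K1" "smooth_sf c" for l m n c
    using in_D_mono[OF in_D_lmul[OF in_D_mono_op_comp[OF M, of l m n] that(2)]] that(1) by simp
  then show ?thesis using in_D_termwise[OF R, of M "\<lambda>x. x"] in_D_smooth[OF M] by simp
qed

section \<open>Contact vector fields\<close>

lemma smooth_sf_Xf [simp]: "smooth_sf f \<Longrightarrow> smooth_sf h \<Longrightarrow> smooth_sf (Xf b f h)"
  by (simp add: Xf_def)

lemma smooth_sf_Lw [simp]: "smooth_sf f \<Longrightarrow> smooth_sf h \<Longrightarrow> smooth_sf (Lw mu b f h)"
  by (simp add: Lw_def)

lemma Lw_eq_Xf: "Lw mu b f h = Xf b f h + scal mu (dx f \<star> h)"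
  by (simp add: Lw_def)

lemma Lw_linear:
  "smooth_sf f \<Longrightarrow> smooth_sf x \<Longrightarrow> smooth_sf y \<Longrightarrow> Lw mu b f (x + y) = Lw mu b f x + Lw mu b f y"
  "smooth_sf f \<Longrightarrow> smooth_sf x \<Longrightarrow> smooth_sf y \<Longrightarrow> Lw mu b f (x - y) = Lw mu b f x - Lw mu b f y"
  "Lw mu b f 0 = 0"
  by (simp_all add: Lw_def Xf_def sfun_defs algebra_simps fun_eq_iff)

lemma Lw_gmul:
  assumes "smooth_sf f" "smooth_sf c" "smooth_sf h" "has_parity b f"
  shows "Lw mu b f (c \<star> h) = Lw mu b f c \<star> h + ginv_if b c \<star> Xf b f h"
  using assms(4,1) by (rule parity_cases)
    (use assms(2,3) in \<open>simp_all add: ginv_if_def Lw_def Xf_def psign_def sfun_defs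
      algebra_simps fun_eq_iff add_divide_distrib diff_divide_distrib\<close>)

lemma dx_Xf:
  assumes "smooth_sf f" "smooth_sf h"
  shows "dx (Xf b f h) = Xf b f (dx h) + Xf b (dx f) h"
  using assms by (simp add: Xf_def psign_def sfun_defs algebra_simps fun_eq_iff
    add_divide_distrib diff_divide_distrib)

definition Xf_Db1_corr :: "sfun \<Rightarrow> sfun \<Rightarrow> sfun" where
  "Xf_Db1_corr f h = scal (1/2) (dx f \<star> Db1 h) - scal (1/2) (Db1 (Db2 f) \<star> Db2 h)"

definition Xf_Db2_corr :: "sfun \<Rightarrow> sfun \<Rightarrow> sfun" where
  "Xf_Db2_corr f h = scal (1/2) (dx f \<star> Db2 h) + scal (1/2) (Db1 (Db2 f) \<star> Db1 h)"

lemma smooth_sf_Xf_Db_corr [simp]: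
  "smooth_sf f \<Longrightarrow> smooth_sf h \<Longrightarrow> smooth_sf (Xf_Db1_corr f h)"
  "smooth_sf f \<Longrightarrow> smooth_sf h \<Longrightarrow> smooth_sf (Xf_Db2_corr f h)"
  by (simp_all add: Xf_Db1_corr_def Xf_Db2_corr_def)

lemma Db1_Xf:
  assumes "smooth_sf f" "smooth_sf h" "has_parity b f"
  shows "scal (psign b) (Db1 (Xf b f h)) = Xf b f (Db1 h) + Xf_Db1_corr f h"
  using assms(3,1) by (rule parity_cases)
    (use assms(2) in \<open>simp_all add: Xf_Db1_corr_def Xf_def psign_def sfun_defs
      algebra_simps fun_eq_iff add_divide_distrib diff_divide_distrib\<close>)

lemma Db2_Xf:
  assumes "smooth_sf f" "smooth_sf h" "has_parity b f"
  shows "scal (psign b) (Db2 (Xf b f h)) = Xf b f (Db2 h) + Xf_Db2_corr f h"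
  using assms(3,1) by (rule parity_cases)
    (use assms(2) in \<open>simp_all add: Xf_Db2_corr_def Xf_def psign_def sfun_defs
      algebra_simps fun_eq_iff add_divide_distrib diff_divide_distrib\<close>)

lemma in_D_Xf_Db_corr: "smooth_sf f \<Longrightarrow> in_D 1 (Xf_Db1_corr f)" "smooth_sf f \<Longrightarrow> in_D 1 (Xf_Db2_corr f)"
  unfolding Xf_Db1_corr_def Xf_Db2_corr_def
  by (intro in_D_add in_D_diff in_D_scal in_D_lmul in_D_Db1 in_D_Db2; simp)+

lemma in_D_Xf_dx_minus: "smooth_sf f \<Longrightarrow> in_D 1 (\<lambda>h. Xf b (dx f) h - dx f \<star> dx h)"
proof -
  assume f: "smooth_sf f"
  have "in_D 1 (\<lambda>g. - scal (psign b / 2) (Db1 (dx f) \<star> Db1 g + Db2 (dx f) \<star> Db2 g))"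
    using f by (intro in_D_uminus in_D_scal in_D_add in_D_lmul in_D_Db1 in_D_Db2) auto
  then show ?thesis by (rule in_D_cong) (simp add: Xf_def)
qed

text \<open>Since the principal part of Xf b f is f \<star> dx, Leibniz gives
  dx^n (Xf h) = Xf (dx^n h) + n dx f \<star> dx^n h + (terms of order at most n - 1/2);
  Xf_dxpow_rem is that remainder.\<close>

definition Xf_dxpow_rem :: "bool \<Rightarrow> sfun \<Rightarrow> nat \<Rightarrow> sfun \<Rightarrow> sfun" where
  "Xf_dxpow_rem b f n h =
    (dx ^^ n) (Xf b f h) - Xf b f ((dx ^^ n) h) - scal (of_nat n) (dx f \<star> (dx ^^ n) h)"

lemma Xf_dxpow_rem_Suc:
  assumes f: "smooth_sf f" and h: "smooth_sf h"
  shows "Xf_dxpow_rem b f (Suc (Suc l)) h = dx (Xf_dxpow_rem b f (Suc l) h)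
     + (Xf b (dx f) ((dx ^^ Suc l) h) - dx f \<star> dx ((dx ^^ Suc l) h))
     + scal (of_nat (Suc l)) (dx (dx f) \<star> (dx ^^ Suc l) h)"
proof -
  define y where "y = (dx ^^ Suc l) h"
  have y: "smooth_sf y" using h by (simp add: y_def)
  have e1: "(dx ^^ Suc (Suc l)) h = dx y" by (simp add: y_def)
  have e2: "(dx ^^ Suc (Suc l)) (Xf b f h) = dx ((dx ^^ Suc l) (Xf b f h))" by simp
  have dxE: "dx (Xf_dxpow_rem b f (Suc l) h)
      = (dx ^^ Suc (Suc l)) (Xf b f h) - Xf b f (dx y) - Xf b (dx f) y
      - scal (of_nat (Suc l)) (dx (dx f) \<star> y + dx f \<star> dx y)"
    using f h y by (simp add: Xf_dxpow_rem_def e2 y_def[symmetric] dx_rules dx_Xf del: funpow.simps)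
  have E2: "Xf_dxpow_rem b f (Suc (Suc l)) h = (dx ^^ Suc (Suc l)) (Xf b f h) - Xf b f (dx y)
      - scal (of_nat (Suc (Suc l))) (dx f \<star> dx y)"
    by (simp only: Xf_dxpow_rem_def e1)
  show ?thesis
    unfolding dxE E2 y_def[symmetric]
    by (simp add: scal_distrib scal_2 algebra_simps del: funpow.simps)
qed

lemma in_D_Xf_dxpow_rem: "smooth_sf f \<Longrightarrow> in_D (2 * l + 1) (Xf_dxpow_rem b f (Suc l))"
proof (induction l)
  case 0
  have "in_D 1 (\<lambda>h. Xf b (dx f) h - dx f \<star> dx h)" using in_D_Xf_dx_minus[OF 0] .
  then have "in_D 1 (Xf_dxpow_rem b f (Suc 0))"
    by (rule in_D_cong) (use 0 in \<open>simp add: Xf_dxpow_rem_def dx_Xf\<close>)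
  then show ?case by simp
next
  case (Suc l)
  have a: "in_D (2 * l + 1 + 2) (\<lambda>h. dx (Xf_dxpow_rem b f (Suc l) h))"
    by (rule in_D_dx_comp[OF Suc.IH[OF Suc.prems]])
  have b: "in_D (1 + 2 * (Suc l)) (\<lambda>h. Xf b (dx f) ((dx ^^ Suc l) h) - dx f \<star> dx ((dx ^^ Suc l) h))"
    using in_D_comp[OF in_D_Xf_dx_minus[OF Suc.prems, of b] in_D_mono_op[of 0 0 "Suc l" "2 * Suc l"]]
    by (simp add: mono_op_def)
  have c: "in_D (2 * Suc l) (\<lambda>h. scal (of_nat (Suc l)) (dx (dx f) \<star> (dx ^^ Suc l) h))"
    using in_D_scal[OF in_D_monomial[of 0 0 "Suc l" "2 * Suc l" "dx (dx f)"]] Suc.prems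
    by (simp add: mono_op_def)
  have "in_D (2 * Suc l + 1) (\<lambda>h. dx (Xf_dxpow_rem b f (Suc l) h)
     + (Xf b (dx f) ((dx ^^ Suc l) h) - dx f \<star> dx ((dx ^^ Suc l) h))
     + scal (of_nat (Suc l)) (dx (dx f) \<star> (dx ^^ Suc l) h))"
    by (intro in_D_add in_D_mono[OF a] in_D_mono[OF b] in_D_mono[OF c]) auto
  then show ?case by (rule in_D_cong) (use Suc.prems in \<open>simp add: Xf_dxpow_rem_Suc del: funpow.simps\<close>)
qed

lemma in_D_Xf_dxpow_commutator:
  "smooth_sf f \<Longrightarrow> in_D (2 * l) (\<lambda>y. Xf b f ((dx ^^ l) y) - (dx ^^ l) (Xf b f y))"
proof (cases l)
  case 0 then show ?thesis by (simp add: in_D_zero)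
next
  case (Suc l')
  assume f: "smooth_sf f"
  have "in_D (2 * l) (\<lambda>y. - Xf_dxpow_rem b f (Suc l') y
      - scal (of_nat (Suc l')) (dx f \<star> (dx ^^ Suc l') y))"
    using Suc f by (intro in_D_diff in_D_uminus in_D_mono[OF in_D_Xf_dxpow_rem] in_D_scal
         in_D_cong[OF in_D_monomial[of 0 0 "Suc l'" "2 * l" "dx f"]]) (auto simp: mono_op_def)
  then show ?thesis by (rule in_D_cong) (use Suc in \<open>simp add: Xf_dxpow_rem_def del: funpow.simps\<close>)
qed

lemma in_D_Xf_dxpow_rem_comp: "smooth_sf f \<Longrightarrow> in_D 1 M \<Longrightarrow> in_D (2 * n) (\<lambda>g. Xf_dxpow_rem b f n (M g))"
proof (cases n)
  case 0 then show ?thesis by (simp add: Xf_dxpow_rem_def in_D_zero)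
next
  case (Suc l)
  assume "smooth_sf f" "in_D 1 M"
  then show ?thesis using in_D_comp[OF in_D_Xf_dxpow_rem[of f l b] \<open>in_D 1 M\<close>] Suc by simp
qed

lemma in_D_Xf_Db1_Db2_commutator:
  assumes f: "smooth_sf f" "has_parity b f"
  shows "in_D 2 (\<lambda>h. Xf b f (Db1 (Db2 h)) - Db1 (Db2 (Xf b f h)))"
proof -
  have Db1_Db2_Xf: "Db1 (Db2 (Xf b f h))
      = Xf b f (Db1 (Db2 h)) + Xf_Db1_corr f (Db2 h) + scal (psign b) (Db1 (Xf_Db2_corr f h))"
    if h: "smooth_sf h" for h
  proof -
    have "Db2 (Xf b f h) = scal (psign b) (Xf b f (Db2 h) + Xf_Db2_corr f h)"
      using Db2_Xf[OF f(1) h f(2)] by (metis scal_simps(1,5) psign_square)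
    then have "Db1 (Db2 (Xf b f h))
        = scal (psign b) (Db1 (Xf b f (Db2 h))) + scal (psign b) (Db1 (Xf_Db2_corr f h))"
      using f h by (simp add: Db_rules scal_distrib)
    then show ?thesis
      using Db1_Xf[OF f(1) _ f(2), of "Db2 h"] h by simp
  qed
  have "in_D 2 (\<lambda>h. Xf_Db1_corr f (Db2 h))" "in_D 2 (\<lambda>h. Db1 (Xf_Db2_corr f h))"
    using in_D_comp[OF in_D_Xf_Db_corr(1)[OF f(1)] in_D_Db2[of 1]]
      in_D_Db1_comp[OF in_D_Xf_Db_corr(2)[OF f(1)]] by (simp_all add: numeral_2_eq_2)
  then have "in_D 2 (\<lambda>h. - Xf_Db1_corr f (Db2 h) - scal (psign b) (Db1 (Xf_Db2_corr f h)))"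
    by (intro in_D_diff in_D_uminus in_D_scal)
  then show ?thesis
    by (rule in_D_cong) (simp add: Db1_Db2_Xf algebra_simps)
qed

lemma in_D_Xf_Db_commutator:
  assumes f: "smooth_sf f" "has_parity b f" and mn: "m < 2" "n < 2"
  shows "in_D (m + n) (\<lambda>h. Xf b f (mono_op 0 m n h)
    - scal (psign (b \<and> odd (m + n))) (mono_op 0 m n (Xf b f h)))"
proof -
  consider "m = 0" "n = 0" | "m = 1" "n = 0" | "m = 0" "n = 1" | "m = 1" "n = 1"
    using mn by linarith
  then show ?thesis
  proof cases
    case 1
    then show ?thesis by (simp add: mono_op_def psign_def in_D_zero)
  next
    case 2
    have "in_D 1 (\<lambda>h. - Xf_Db1_corr f h)" by (rule in_D_uminus[OF in_D_Xf_Db_corr(1)[OF f(1)]])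
    then have "in_D 1 (\<lambda>h. Xf b f (Db1 h) - scal (psign b) (Db1 (Xf b f h)))"
      by (rule in_D_cong) (simp add: Db1_Xf f)
    then show ?thesis using 2 by (simp add: mono_op_def)
  next
    case 3
    have "in_D 1 (\<lambda>h. - Xf_Db2_corr f h)" by (rule in_D_uminus[OF in_D_Xf_Db_corr(2)[OF f(1)]])
    then have "in_D 1 (\<lambda>h. Xf b f (Db2 h) - scal (psign b) (Db2 (Xf b f h)))"
      by (rule in_D_cong) (simp add: Db2_Xf f)
    then show ?thesis using 3 by (simp add: mono_op_def)
  next
    case 4
    then show ?thesis
      using in_D_Xf_Db1_Db2_commutator[OF f] by (simp add: mono_op_def psign_def numeral_2_eq_2)
  qed
qed

lemma in_D_Xf_mono_op_commutator:
  assumes f: "smooth_sf f" "has_parity b f" and mn: "m < 2" "n < 2"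
  shows "in_D (2 * l + m + n) (\<lambda>h. Xf b f (mono_op l m n h)
    - scal (psign (b \<and> odd (m + n))) (mono_op l m n (Xf b f h)))"
proof -
  let ?s = "psign (b \<and> odd (m + n))"
  have a: "in_D (2 * l + (m + n))
      (\<lambda>h. Xf b f ((dx ^^ l) (mono_op 0 m n h)) - (dx ^^ l) (Xf b f (mono_op 0 m n h)))"
    by (rule in_D_comp[OF in_D_Xf_dxpow_commutator[OF f(1)] in_D_mono_op]) (use mn in auto)
  have b: "in_D (m + n + 2 * l)
      (\<lambda>h. (dx ^^ l) (Xf b f (mono_op 0 m n h) - scal ?s (mono_op 0 m n (Xf b f h))))"
    by (rule in_D_dxpow_comp[OF in_D_Xf_Db_commutator[OF f mn]])
  have "in_D (2 * l + m + n)
      (\<lambda>h. (Xf b f ((dx ^^ l) (mono_op 0 m n h)) - (dx ^^ l) (Xf b f (mono_op 0 m n h)))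
       + (dx ^^ l) (Xf b f (mono_op 0 m n h) - scal ?s (mono_op 0 m n (Xf b f h))))"
    using a b by (intro in_D_add) (auto simp: algebra_simps)
  then show ?thesis
    by (rule in_D_cong) (use f in \<open>simp add: mono_op_split[of l m n] dxpow_linear del: funpow.simps\<close>)
qed

section \<open>The action on differential operators\<close>

text \<open>For odd f, the signed combination op_even A - op_odd A occurring in Lop is the
  conjugate of A by the grade involution, which is 1 on even and -1 on odd superfunctions.\<close>

definition op_twist :: "bool \<Rightarrow> (sfun \<Rightarrow> sfun) \<Rightarrow> sfun \<Rightarrow> sfun" where
  "op_twist b A k = (if b then ginv (A (ginv k)) else A k)"

definition Lop_tw :: "complex \<Rightarrow> complex \<Rightarrow> bool \<Rightarrow> sfun \<Rightarrow> (sfun \<Rightarrow> sfun) \<Rightarrow> sfun \<Rightarrow> sfun" where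
  "Lop_tw lam mu b f A g = Lw mu b f (A g) - op_twist b A (Lw lam b f g)"

lemma Lop_eq_Lop_tw:
  assumes A: "in_D K A" and f: "smooth_sf f" and g: "smooth_sf g"
  shows "Lop lam mu b f A g = Lop_tw lam mu b f A g"
proof -
  define k where "k = Lw lam b f g"
  have k: "smooth_sf k" using f g by (simp add: k_def)
  have split: "A k = A (ev_part k) + A (od_part k)"
    using in_D_linear(1)[OF A, of "ev_part k" "od_part k"] k by (simp add: ev_od_part)
  have split_ginv: "A (ginv k) = A (ev_part k) - A (od_part k)"
    using in_D_linear(2)[OF A, of "ev_part k" "od_part k"] k by (simp add: ev_od_part)
  have even_plus_odd: "op_even A k + op_odd A k = A k"
    unfolding op_even_def op_odd_def split by (metis ev_od_part(1) add.assoc add.commute)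
  have "op_even A k - op_odd A k = ginv (A (ev_part k)) - ginv (A (od_part k))"
    unfolding op_even_def op_odd_def by (simp add: ev_od_part(2)[symmetric] algebra_simps)
  also have "\<dots> = ginv (A (ginv k))"
    unfolding split_ginv ginv_rules(4) ..
  finally have even_minus_odd: "op_even A k - op_odd A k = ginv (A (ginv k))" .
  show ?thesis
    using even_plus_odd even_minus_odd unfolding Lop_def Lop_tw_def op_twist_def k_def[symmetric]
    by (cases b) (simp_all add: psign_def algebra_simps)
qed

lemma Lop_tw_add:
  assumes "in_D K A" "in_D K' B" "smooth_sf f" "smooth_sf g"
  shows "Lop_tw lam mu b f (\<lambda>g. A g + B g) g = Lop_tw lam mu b f A g + Lop_tw lam mu b f B g"
  using assms in_D_smooth[OF assms(1)] in_D_smooth[OF assms(2)]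
  by (simp add: Lop_tw_def op_twist_def Lw_linear ginv_rules algebra_simps)

lemma Lop_tw_zero: "Lop_tw lam mu b f (\<lambda>g. 0) g = 0"
  by (simp add: Lop_tw_def op_twist_def Lw_linear ginv_rules)

lemma Lop_tw_if:
  "Lop_tw lam mu b f (\<lambda>g. if P then A g else 0) g = (if P then Lop_tw lam mu b f A g else 0)"
  by (simp add: Lop_tw_zero)

lemma Lop_tw_sum:
  assumes "finite I" "\<And>i. i \<in> I \<Longrightarrow> in_D K (T i)" "smooth_sf f" "smooth_sf g"
  shows "Lop_tw lam mu b f (\<lambda>g. \<Sum>i\<in>I. T i g) g = (\<Sum>i\<in>I. Lop_tw lam mu b f (T i) g)"
  using assms(1,2)
proof (induction I rule: finite_induct)
  case (insert i I)
  then have "Lop_tw lam mu b f (\<lambda>g. T i g + (\<Sum>i\<in>I. T i g)) g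
      = Lop_tw lam mu b f (T i) g + Lop_tw lam mu b f (\<lambda>g. \<Sum>i\<in>I. T i g) g"
    using assms by (intro Lop_tw_add[of K _ K]) (auto intro: in_D_sum)
  with insert show ?case by simp
qed (simp add: Lop_tw_zero)

lemma Lop_tw_cong:
  "(\<And>x. smooth_sf x \<Longrightarrow> A x = B x) \<Longrightarrow> smooth_sf f \<Longrightarrow> smooth_sf g \<Longrightarrow>
   Lop_tw lam mu b f A g = Lop_tw lam mu b f B g"
  by (simp add: Lop_tw_def op_twist_def)

lemma Lop_tw_monomial:
  assumes f: "smooth_sf f" "has_parity b f" and mn: "m < 2" "n < 2"
    and c: "smooth_sf c" and g: "smooth_sf g"
  defines "s \<equiv> psign (b \<and> odd (m + n))"
  shows "Lop_tw lam mu b f (\<lambda>g. c \<star> mono_op l m n g) g = Lw mu b f c \<star> mono_op l m n g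
     + ginv_if b c \<star> (Xf b f (mono_op l m n g) - scal s (mono_op l m n (Xf b f g)))
     - ginv_if b c \<star> scal (s * lam) (mono_op l m n (dx f \<star> g))"
proof -
  have twist: "op_twist b (\<lambda>g. c \<star> mono_op l m n g) k = ginv_if b c \<star> scal s (mono_op l m n k)"
    if "smooth_sf k" for k
    using ginv_mono_op[OF that mn, of l]
    by (cases b) (simp_all add: s_def op_twist_def ginv_if_def ginv_rules psign_def)
  show ?thesis
    unfolding Lop_tw_def using f g c
    by (simp add: twist Lw_gmul mono_op_linear Lw_eq_Xf[of lam b f g] scal_distrib gmul_distrib
        algebra_simps)
qed

lemma in_D_Lop_tw_monomial:
  assumes f: "smooth_sf f" "has_parity b f" and mn: "m < 2" "n < 2" and c: "smooth_sf c"
  shows "in_D (2 * l + m + n) (Lop_tw lam mu b f (\<lambda>g. c \<star> mono_op l m n g))"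
proof -
  let ?s = "psign (b \<and> odd (m + n))" and ?M = "mono_op l m n"
  have "in_D (2 * l + m + n) ?M" "in_D (2 * l + m + n) (\<lambda>g. ?M (dx f \<star> g))"
    using in_D_comp[OF in_D_mono_op[of m n l "2 * l + m + n"] in_D_gmul[of "dx f" 0]]
      in_D_mono_op[of m n l] f mn by simp_all
  then have "in_D (2 * l + m + n) (\<lambda>g. Lw mu b f c \<star> ?M g
     + ginv_if b c \<star> (Xf b f (?M g) - scal ?s (?M (Xf b f g)))
     - ginv_if b c \<star> scal (?s * lam) (?M (dx f \<star> g)))"
    using f c by (intro in_D_add in_D_diff in_D_lmul in_D_scal in_D_Xf_mono_op_commutator mn) auto
  then show ?thesis
    by (rule in_D_cong) (simp add: Lop_tw_monomial[OF f mn c])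
qed

lemma in_D_Lop:
  assumes B: "in_D K B" and f: "smooth_sf f" "has_parity b f"
  shows "in_D K (Lop lam mu b f B)"
proof -
  obtain a where a: "\<forall>l m n. smooth_sf (a l m n)" "\<forall>g. smooth_sf g \<longrightarrow> B g = diffop K a g"
    using B unfolding in_D_iff_diffop by blast
  define T where "T l m n g = (if 2 * l + m + n \<le> K then a l m n \<star> mono_op l m n g else 0)"
    for l m n g
  have T: "in_D K (T l m n)" if "m < 2" "n < 2" for l m n
    unfolding T_def using a that by (intro in_D_if in_D_monomial) auto
  have T_sums: "in_D K (\<lambda>g. \<Sum>n<2. T l m n g)" if "m < 2" for l m
    using that by (auto intro!: in_D_sum T)
  have T_sums': "in_D K (\<lambda>g. \<Sum>m<2. \<Sum>n<2. T l m n g)" for l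
    by (auto intro!: in_D_sum T)
  have Lop_B: "Lop lam mu b f B g = (\<Sum>l\<le>K. \<Sum>m<2. \<Sum>n<2. Lop_tw lam mu b f (T l m n) g)"
    if g: "smooth_sf g" for g
  proof -
    have "Lop lam mu b f B g = Lop_tw lam mu b f B g"
      by (rule Lop_eq_Lop_tw[OF B f(1) g])
    also have "\<dots> = Lop_tw lam mu b f (\<lambda>g. \<Sum>l\<le>K. \<Sum>m<2. \<Sum>n<2. T l m n g) g"
      using a f g by (intro Lop_tw_cong) (auto simp: diffop_def T_def)
    also have "\<dots> = (\<Sum>l\<le>K. Lop_tw lam mu b f (\<lambda>g. \<Sum>m<2. \<Sum>n<2. T l m n g) g)"
      by (rule Lop_tw_sum[OF _ T_sums' f(1) g]) auto
    also have "\<dots> = (\<Sum>l\<le>K. \<Sum>m<2. Lop_tw lam mu b f (\<lambda>g. \<Sum>n<2. T l m n g) g)"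
      by (intro sum.cong refl Lop_tw_sum[OF _ T_sums f(1) g]) auto
    also have "\<dots> = (\<Sum>l\<le>K. \<Sum>m<2. \<Sum>n<2. Lop_tw lam mu b f (T l m n) g)"
      by (intro sum.cong refl Lop_tw_sum[OF _ T f(1) g]) auto
    finally show ?thesis .
  qed
  have "in_D K (\<lambda>g. \<Sum>l\<le>K. \<Sum>m<2. \<Sum>n<2. Lop_tw lam mu b f (T l m n) g)"
  proof (intro in_D_sum, simp_all)
    fix l m n :: nat assume "m < 2" "n < 2"
    then show "in_D K (Lop_tw lam mu b f (T l m n))"
      unfolding T_def Lop_tw_if using a f
      by (intro in_D_if in_D_mono[OF in_D_Lop_tw_monomial]) auto
  qed
  then show ?thesis
    by (rule in_D_cong) (simp add: Lop_B)
qed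

lemma Lop_add:
  assumes "in_D K A" "in_D K' B" "smooth_sf f" "smooth_sf g"
  shows "Lop lam mu b f (\<lambda>g. A g + B g) g = Lop lam mu b f A g + Lop lam mu b f B g"
proof -
  have "in_D (max K K') A" "in_D (max K K') B"
    using assms(1,2) by (auto intro: in_D_mono)
  then show ?thesis
    using assms(3,4) by (simp add: Lop_eq_Lop_tw[where K = "max K K'"] in_D_add Lop_tw_add)
qed

lemma Lop_cong:
  "(\<And>x. smooth_sf x \<Longrightarrow> A x = B x) \<Longrightarrow> smooth_sf f \<Longrightarrow> smooth_sf g \<Longrightarrow>
   Lop lam mu b f A g = Lop lam mu b f B g"
  by (simp add: Lop_def op_even_def op_odd_def)

section \<open>Principal symbols\<close>

lemma in_D_dxpow_lmul_commutator_Suc: assumes c: "smooth_sf c" and M: "in_D K M"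
  shows "in_D (2 * l + K) (\<lambda>g. (dx ^^ Suc l) (c \<star> M g) - c \<star> (dx ^^ Suc l) (M g))"
proof (induction l)
  case 0
  have "in_D K (\<lambda>g. dx c \<star> M g)" using in_D_lmul[OF M] c by simp
  then have "in_D K (\<lambda>g. (dx ^^ Suc 0) (c \<star> M g) - c \<star> (dx ^^ Suc 0) (M g))"
    by (rule in_D_cong) (use c in_D_smooth[OF M] in \<open>simp add: dx_rules\<close>)
  then show ?case by simp
next
  case (Suc l)
  have a: "in_D (2 * l + K + 2) (\<lambda>g. dx ((dx ^^ Suc l) (c \<star> M g) - c \<star> (dx ^^ Suc l) (M g)))"
    by (rule in_D_dx_comp[OF Suc.IH])
  have b: "in_D (K + 2 * Suc l) (\<lambda>g. dx c \<star> (dx ^^ Suc l) (M g))"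
    using in_D_lmul[OF in_D_dxpow_comp[OF M, of "Suc l"], of "dx c"] c by simp
  have "in_D (2 * Suc l + K)
      (\<lambda>g. dx ((dx ^^ Suc l) (c \<star> M g) - c \<star> (dx ^^ Suc l) (M g)) + dx c \<star> (dx ^^ Suc l) (M g))"
    by (rule in_D_add[OF in_D_mono[OF a] in_D_mono[OF b]]) auto
  then show ?case
  proof (rule in_D_cong)
    fix g assume g: "smooth_sf g"
    have Mg: "smooth_sf (M g)" using in_D_smooth[OF M g] .
    show "dx ((dx ^^ Suc l) (c \<star> M g) - c \<star> (dx ^^ Suc l) (M g)) + dx c \<star> (dx ^^ Suc l) (M g)
        = (dx ^^ Suc (Suc l)) (c \<star> M g) - c \<star> (dx ^^ Suc (Suc l)) (M g)"
      using c Mg by (simp add: dx_rules del: funpow.simps) (simp add: algebra_simps)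
  qed
qed

lemma in_D_dxpow_lmul_commutator: assumes c: "smooth_sf c" and M: "in_D 1 M"
  shows "in_D (2 * n) (\<lambda>g. (dx ^^ n) (c \<star> M g) - c \<star> (dx ^^ n) (M g))"
proof (cases n)
  case 0 then show ?thesis by (simp add: in_D_zero)
next
  case (Suc l)
  then show ?thesis using in_D_mono[OF in_D_dxpow_lmul_commutator_Suc[OF c M, of l]] by simp
qed

lemma in_D_Xf_dxpow_Db1_commutator:
  assumes f: "smooth_sf f" "has_parity b f"
  shows "in_D (2 * n) (\<lambda>g. Xf b f ((dx ^^ n) (Db1 g)) - scal (psign b) ((dx ^^ n) (Db1 (Xf b f g)))
    + scal (of_nat n + 1/2) (dx f \<star> (dx ^^ n) (Db1 g)) - scal (1/2) (Db1 (Db2 f) \<star> (dx ^^ n) (Db2 g)))"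
proof -
  have Db1_Xf': "scal (psign b) ((dx ^^ n) (Db1 (Xf b f g))) = (dx ^^ n) (Xf b f (Db1 g))
      + (scal (1/2) ((dx ^^ n) (dx f \<star> Db1 g)) - scal (1/2) ((dx ^^ n) (Db1 (Db2 f) \<star> Db2 g)))"
    if g: "smooth_sf g" for g
  proof -
    have "scal (psign b) ((dx ^^ n) (Db1 (Xf b f g))) = (dx ^^ n) (Xf b f (Db1 g) + Xf_Db1_corr f g)"
      using f g by (simp add: Db1_Xf flip: dxpow_linear)
    then show ?thesis
      using f g by (simp add: Xf_Db1_corr_def dxpow_linear)
  qed
  have E: "in_D (2 * n) (\<lambda>g. Xf_dxpow_rem b f n (Db1 g))"
    by (rule in_D_Xf_dxpow_rem_comp[OF f(1) in_D_Db1]) simp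
  have L1: "in_D (2 * n) (\<lambda>g. (dx ^^ n) (dx f \<star> Db1 g) - dx f \<star> (dx ^^ n) (Db1 g))"
    by (rule in_D_dxpow_lmul_commutator) (use f in \<open>auto intro: in_D_Db1\<close>)
  have L2: "in_D (2 * n) (\<lambda>g. (dx ^^ n) (Db1 (Db2 f) \<star> Db2 g) - Db1 (Db2 f) \<star> (dx ^^ n) (Db2 g))"
    by (rule in_D_dxpow_lmul_commutator) (use f in \<open>auto intro: in_D_Db2\<close>)
  have "in_D (2 * n) (\<lambda>g. - Xf_dxpow_rem b f n (Db1 g)
      - scal (1/2) ((dx ^^ n) (dx f \<star> Db1 g) - dx f \<star> (dx ^^ n) (Db1 g))
      + scal (1/2) ((dx ^^ n) (Db1 (Db2 f) \<star> Db2 g) - Db1 (Db2 f) \<star> (dx ^^ n) (Db2 g)))"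
    by (rule in_D_add[OF in_D_diff[OF in_D_uminus[OF E] in_D_scal[OF L1]] in_D_scal[OF L2]])
  then show ?thesis
    by (rule in_D_cong) (simp add: Db1_Xf' Xf_dxpow_rem_def scal_distrib(1,2,3) algebra_simps)
qed

lemma in_D_Xf_dxpow_Db2_commutator:
  assumes f: "smooth_sf f" "has_parity b f"
  shows "in_D (2 * n) (\<lambda>g. Xf b f ((dx ^^ n) (Db2 g)) - scal (psign b) ((dx ^^ n) (Db2 (Xf b f g)))
    + scal (of_nat n + 1/2) (dx f \<star> (dx ^^ n) (Db2 g)) + scal (1/2) (Db1 (Db2 f) \<star> (dx ^^ n) (Db1 g)))"
proof -
  have Db2_Xf': "scal (psign b) ((dx ^^ n) (Db2 (Xf b f g))) = (dx ^^ n) (Xf b f (Db2 g))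
      + (scal (1/2) ((dx ^^ n) (dx f \<star> Db2 g)) + scal (1/2) ((dx ^^ n) (Db1 (Db2 f) \<star> Db1 g)))"
    if g: "smooth_sf g" for g
  proof -
    have "scal (psign b) ((dx ^^ n) (Db2 (Xf b f g))) = (dx ^^ n) (Xf b f (Db2 g) + Xf_Db2_corr f g)"
      using f g by (simp add: Db2_Xf flip: dxpow_linear)
    then show ?thesis
      using f g by (simp add: Xf_Db2_corr_def dxpow_linear)
  qed
  have E: "in_D (2 * n) (\<lambda>g. Xf_dxpow_rem b f n (Db2 g))"
    by (rule in_D_Xf_dxpow_rem_comp[OF f(1) in_D_Db2]) simp
  have L1: "in_D (2 * n) (\<lambda>g. (dx ^^ n) (dx f \<star> Db2 g) - dx f \<star> (dx ^^ n) (Db2 g))"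
    by (rule in_D_dxpow_lmul_commutator) (use f in \<open>auto intro: in_D_Db2\<close>)
  have L2: "in_D (2 * n) (\<lambda>g. (dx ^^ n) (Db1 (Db2 f) \<star> Db1 g) - Db1 (Db2 f) \<star> (dx ^^ n) (Db1 g))"
    by (rule in_D_dxpow_lmul_commutator) (use f in \<open>auto intro: in_D_Db1\<close>)
  have "in_D (2 * n) (\<lambda>g. - Xf_dxpow_rem b f n (Db2 g)
      - scal (1/2) ((dx ^^ n) (dx f \<star> Db2 g) - dx f \<star> (dx ^^ n) (Db2 g))
      - scal (1/2) ((dx ^^ n) (Db1 (Db2 f) \<star> Db1 g) - Db1 (Db2 f) \<star> (dx ^^ n) (Db1 g)))"
    by (rule in_D_diff[OF in_D_diff[OF in_D_uminus[OF E] in_D_scal[OF L1]] in_D_scal[OF L2]])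
  then show ?thesis
    by (rule in_D_cong) (simp add: Db2_Xf' Xf_dxpow_rem_def scal_distrib(1,2,3) algebra_simps)
qed

lemma in_D_dxpow_Db1_lmul_dx_commutator:
  assumes f: "smooth_sf f" "has_parity b f"
  shows "in_D (2 * n) (\<lambda>g. scal (psign b) ((dx ^^ n) (Db1 (dx f \<star> g))) - dx f \<star> (dx ^^ n) (Db1 g))"
proof -
  have Db1_lmul: "Db1 (dx f \<star> g) = Db1 (dx f) \<star> g + scal (psign b) (dx f \<star> Db1 g)"
    if "smooth_sf g" for g
    using f that by (simp add: Db_rules ginv_parity[OF has_parity_dx[OF f(2)]] gmul_scal)
  have "in_D (2 * n) (\<lambda>g. (dx ^^ n) (Db1 (dx f) \<star> g))"
    using in_D_comp[OF in_D_mono_op[of 0 0 n "2 * n"] in_D_gmul[of "Db1 (dx f)" 0]] f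
    by (simp add: mono_op_def)
  then have "in_D (2 * n) (\<lambda>g. scal (psign b) ((dx ^^ n) (Db1 (dx f) \<star> g))
      + ((dx ^^ n) (dx f \<star> Db1 g) - dx f \<star> (dx ^^ n) (Db1 g)))"
    by (rule in_D_add[OF in_D_scal in_D_dxpow_lmul_commutator[OF _ in_D_Db1]]) (use f in auto)
  then show ?thesis
    by (rule in_D_cong) (simp add: Db1_lmul f dxpow_linear scal_distrib(1))
qed

lemma in_D_dxpow_Db2_lmul_dx_commutator:
  assumes f: "smooth_sf f" "has_parity b f"
  shows "in_D (2 * n) (\<lambda>g. scal (psign b) ((dx ^^ n) (Db2 (dx f \<star> g))) - dx f \<star> (dx ^^ n) (Db2 g))"
proof -
  have Db2_lmul: "Db2 (dx f \<star> g) = Db2 (dx f) \<star> g + scal (psign b) (dx f \<star> Db2 g)"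
    if "smooth_sf g" for g
    using f that by (simp add: Db_rules ginv_parity[OF has_parity_dx[OF f(2)]] gmul_scal)
  have "in_D (2 * n) (\<lambda>g. (dx ^^ n) (Db2 (dx f) \<star> g))"
    using in_D_comp[OF in_D_mono_op[of 0 0 n "2 * n"] in_D_gmul[of "Db2 (dx f)" 0]] f
    by (simp add: mono_op_def)
  then have "in_D (2 * n) (\<lambda>g. scal (psign b) ((dx ^^ n) (Db2 (dx f) \<star> g))
      + ((dx ^^ n) (dx f \<star> Db2 g) - dx f \<star> (dx ^^ n) (Db2 g)))"
    by (rule in_D_add[OF in_D_scal in_D_dxpow_lmul_commutator[OF _ in_D_Db2]]) (use f in auto)
  then show ?thesis
    by (rule in_D_cong) (simp add: Db2_lmul f dxpow_linear scal_distrib(1))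
qed

lemma Lop_symbol_Db1:
  assumes f: "smooth_sf f" "has_parity b f" and F: "smooth_sf F"
  shows "in_D (2 * n) (\<lambda>g. Lop lam mu b f (\<lambda>g. F \<star> (dx ^^ n) (Db1 g)) g
     - (Lw (mu - lam - (of_nat n + 1/2)) b f F \<star> (dx ^^ n) (Db1 g)
        + scal (1/2) (Db1 (Db2 f) \<star> F) \<star> (dx ^^ n) (Db2 g)))"
proof -
  have P: "in_D (2 * n + 1) (\<lambda>g. F \<star> mono_op n 1 0 g)"
    using F by (intro in_D_monomial) auto
  have Lop_P: "Lop lam mu b f (\<lambda>g. F \<star> (dx ^^ n) (Db1 g)) g = Lw mu b f F \<star> (dx ^^ n) (Db1 g)
     + ginv_if b F \<star> (Xf b f ((dx ^^ n) (Db1 g)) - scal (psign b) ((dx ^^ n) (Db1 (Xf b f g))))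
     - ginv_if b F \<star> scal (psign b * lam) ((dx ^^ n) (Db1 (dx f \<star> g)))" if g: "smooth_sf g" for g
    using Lop_eq_Lop_tw[OF P f(1) g] Lop_tw_monomial[OF f _ _ F g, of 1 0 lam mu n]
    by (simp add: mono_op_def)
  have "in_D (2 * n) (\<lambda>g. ginv_if b F \<star>
     ((Xf b f ((dx ^^ n) (Db1 g)) - scal (psign b) ((dx ^^ n) (Db1 (Xf b f g)))
       + scal (of_nat n + 1/2) (dx f \<star> (dx ^^ n) (Db1 g)) - scal (1/2) (Db1 (Db2 f) \<star> (dx ^^ n) (Db2 g)))
      - scal lam (scal (psign b) ((dx ^^ n) (Db1 (dx f \<star> g))) - dx f \<star> (dx ^^ n) (Db1 g))))"
    by (rule in_D_lmul[OF in_D_diff[OF in_D_Xf_dxpow_Db1_commutator[OF f]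
        in_D_scal[OF in_D_dxpow_Db1_lmul_dx_commutator[OF f]]]]) (use F in simp)
  then show ?thesis
    by (rule in_D_cong) (use f in \<open>simp add: Lop_P Lw_eq_Xf gmul_distrib gmul_scal
        gmul_assoc[symmetric] ginv_if_gmul_commute has_parity_dx has_parity_Db1_Db2
        scal_distrib algebra_simps\<close>)
qed

lemma Lop_symbol_Db2:
  assumes f: "smooth_sf f" "has_parity b f" and F: "smooth_sf F"
  shows "in_D (2 * n) (\<lambda>g. Lop lam mu b f (\<lambda>g. F \<star> (dx ^^ n) (Db2 g)) g
     - (Lw (mu - lam - (of_nat n + 1/2)) b f F \<star> (dx ^^ n) (Db2 g)
        - scal (1/2) (Db1 (Db2 f) \<star> F) \<star> (dx ^^ n) (Db1 g)))"
proof -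
  have P: "in_D (2 * n + 1) (\<lambda>g. F \<star> mono_op n 0 1 g)"
    using F by (intro in_D_monomial) auto
  have Lop_P: "Lop lam mu b f (\<lambda>g. F \<star> (dx ^^ n) (Db2 g)) g = Lw mu b f F \<star> (dx ^^ n) (Db2 g)
     + ginv_if b F \<star> (Xf b f ((dx ^^ n) (Db2 g)) - scal (psign b) ((dx ^^ n) (Db2 (Xf b f g))))
     - ginv_if b F \<star> scal (psign b * lam) ((dx ^^ n) (Db2 (dx f \<star> g)))" if g: "smooth_sf g" for g
    using Lop_eq_Lop_tw[OF P f(1) g] Lop_tw_monomial[OF f _ _ F g, of 0 1 lam mu n]
    by (simp add: mono_op_def)
  have "in_D (2 * n) (\<lambda>g. ginv_if b F \<star>
     ((Xf b f ((dx ^^ n) (Db2 g)) - scal (psign b) ((dx ^^ n) (Db2 (Xf b f g)))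
       + scal (of_nat n + 1/2) (dx f \<star> (dx ^^ n) (Db2 g)) + scal (1/2) (Db1 (Db2 f) \<star> (dx ^^ n) (Db1 g)))
      - scal lam (scal (psign b) ((dx ^^ n) (Db2 (dx f \<star> g))) - dx f \<star> (dx ^^ n) (Db2 g))))"
    by (rule in_D_lmul[OF in_D_diff[OF in_D_Xf_dxpow_Db2_commutator[OF f]
        in_D_scal[OF in_D_dxpow_Db2_lmul_dx_commutator[OF f]]]]) (use F in simp)
  then show ?thesis
    by (rule in_D_cong) (use f in \<open>simp add: Lop_P Lw_eq_Xf gmul_distrib gmul_scal
        gmul_assoc[symmetric] ginv_if_gmul_commute has_parity_dx has_parity_Db1_Db2
        scal_distrib algebra_simps\<close>)
qed

theorem proposition3p6:
  fixes lam mu :: complex and n :: nat and b :: bool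
    and f F1 F2 :: sfun and A :: "sfun \<Rightarrow> sfun"
  assumes "smooth_sf f" and "has_parity b f"
    and "smooth_sf F1" and "smooth_sf F2"
    and "in_D (2 * n) (\<lambda>g. A g - (F1 \<star> (dx ^^ n) (Db1 g) + F2 \<star> (dx ^^ n) (Db2 g)))"
  shows "in_D (2 * n) (\<lambda>g. Lop lam mu b f A g -
           ((Lw (mu - lam - (of_nat n + 1/2)) b f F1 - scal (1/2) (Db1 (Db2 f) \<star> F2))
               \<star> (dx ^^ n) (Db1 g)
          + (Lw (mu - lam - (of_nat n + 1/2)) b f F2 + scal (1/2) (Db1 (Db2 f) \<star> F1))
               \<star> (dx ^^ n) (Db2 g)))"
proof -
  define P1 P2 where "P1 = (\<lambda>g. F1 \<star> (dx ^^ n) (Db1 g))" and "P2 = (\<lambda>g. F2 \<star> (dx ^^ n) (Db2 g))"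
  define B where "B = (\<lambda>g. A g - (P1 g + P2 g))"
  have B: "in_D (2 * n) B"
    using assms(5) by (simp add: B_def P1_def P2_def)
  have P: "in_D (2 * n + 1) P1" "in_D (2 * n + 1) P2"
    using in_D_monomial[of 1 0 n "2 * n + 1" F1] in_D_monomial[of 0 1 n "2 * n + 1" F2] assms(3,4)
    by (simp_all add: P1_def P2_def mono_op_def)
  have Lop_A: "Lop lam mu b f A g = Lop lam mu b f B g + Lop lam mu b f P1 g + Lop lam mu b f P2 g"
    if "smooth_sf g" for g
  proof -
    have "Lop lam mu b f A g = Lop lam mu b f (\<lambda>g. B g + (P1 g + P2 g)) g"
      using assms(1) that by (intro Lop_cong) (simp_all add: B_def)
    also have "\<dots> = Lop lam mu b f B g + Lop lam mu b f (\<lambda>g. P1 g + P2 g) g"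
      by (rule Lop_add[OF B in_D_add[OF P] assms(1) that])
    also have "Lop lam mu b f (\<lambda>g. P1 g + P2 g) g = Lop lam mu b f P1 g + Lop lam mu b f P2 g"
      by (rule Lop_add[OF P assms(1) that])
    finally show ?thesis
      by (simp add: add.assoc)
  qed
  have "in_D (2 * n) (\<lambda>g. Lop lam mu b f B g
     + (Lop lam mu b f P1 g - (Lw (mu - lam - (of_nat n + 1/2)) b f F1 \<star> (dx ^^ n) (Db1 g)
        + scal (1/2) (Db1 (Db2 f) \<star> F1) \<star> (dx ^^ n) (Db2 g)))
     + (Lop lam mu b f P2 g - (Lw (mu - lam - (of_nat n + 1/2)) b f F2 \<star> (dx ^^ n) (Db2 g)
        - scal (1/2) (Db1 (Db2 f) \<star> F2) \<star> (dx ^^ n) (Db1 g))))"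
    unfolding P1_def P2_def
    by (intro in_D_add in_D_Lop[OF B] Lop_symbol_Db1 Lop_symbol_Db2 assms(1-4))
  then show ?thesis
    by (rule in_D_cong) (simp add: Lop_A P1_def P2_def gmul_distrib algebra_simps)
qed

end
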